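(* Let $a<b$ and let $X=(X_1,\dots,X_n)$ have coordinates taking values in finite subsets of $[a,b]$ and satisfy a $\mathfrak{d}$-LSI$(\sigma^2)$. Let $(\mathcal{B},\|\cdot\|)$ be a Banach space with dual unit ball $\mathcal{B}_1^*$, $\mathcal{T}$ a compact set of families $t=(t_{ij})_{1\le i<j\le n}$ in $\mathcal{B}$ (extended by $t_{ji}=t_{ij}$, $t_{ii}=0$), and $f_{\mathcal{T}}(X)=\sup_{t\in\mathcal{T}}\|\sum_{i<j}X_iX_jt_{ij}\|$. Put $T_1=\mathbb{E}\sup_{t\in\mathcal{T}}\sup_{v^*\in\mathcal{B}_1^*}\big(\sum_{i=1}^n(\sum_{j=1}^nX_jv^*(t_{ij}))^2\big)^{1/2}$ and $T_2=\sup_{t\in\mathcal{T}}\sup_{v^*\in\mathcal{B}_1^*}|(v^*(t_{ij}))_{i,j}|_{\mathrm{op}}$. Then for all $t\ge0$, \[ \mathbb{P}\big(f_{\mathcal{T}}(X)-\mathbb{E}f_{\mathcal{T}}(X)\ge t\big)\le2\exp\Big(-\frac{1}{60(b-a)^2\sigma^2}\min\Big(\frac{t^2}{T_1^2},\frac{t}{T_2}\Big)\Big). \]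
   Context: $\mathfrak{d}$-LSI$(\sigma^2)$: with $\mu$ the law of $X$, $\mathfrak{d}_iF(x)^2=\mathrm{Var}_{\mu(\cdot\mid x_{i^c})}(F(x_{i^c},\cdot))$ (variance under the conditional law of $X_i$ given the other coordinates), $|\mathfrak{d}F|^2=\sum_i\mathfrak{d}_iF^2$, and $\mathrm{Ent}_\mu(F^2)\le2\sigma^2\int|\mathfrak{d}F|^2d\mu$ for all $F$, where $\mathrm{Ent}_\mu(h)=\int h\log h\,d\mu-\int h\,d\mu\log\int h\,d\mu$. $|M|_{\mathrm{op}}$ is the operator norm of a real matrix. *)

theory Defs
  imports "HOL-Analysis.Analysis" "HOL-Probability.Probability"
begin

text \<open>Conditional variance of F in coordinate i, given the other coordinates of x
  (i.e. the square of the discrete gradient component).\<close>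
definition d_sq :: "(real^'n::finite) pmf \<Rightarrow> (real^'n \<Rightarrow> real) \<Rightarrow> 'n \<Rightarrow> real^'n \<Rightarrow> real" where
  "d_sq \<mu> F i x = measure_pmf.variance (cond_pmf \<mu> {y. \<forall>j. j \<noteq> i \<longrightarrow> y $ j = x $ j}) F"

definition grad_sq :: "(real^'n::finite) pmf \<Rightarrow> (real^'n \<Rightarrow> real) \<Rightarrow> real^'n \<Rightarrow> real" where
  "grad_sq \<mu> F x = (\<Sum>i\<in>UNIV. d_sq \<mu> F i x)"

definition xlogx :: "real \<Rightarrow> real" where
  "xlogx x = (if x = 0 then 0 else x * ln x)"

definition ent :: "'a pmf \<Rightarrow> ('a \<Rightarrow> real) \<Rightarrow> real" where
  "ent \<mu> h = measure_pmf.expectation \<mu> (\<lambda>x. xlogx (h x)) - xlogx (measure_pmf.expectation \<mu> h)"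

definition d_LSI :: "(real^'n::finite) pmf \<Rightarrow> real \<Rightarrow> bool" where
  "d_LSI \<mu> \<sigma> \<longleftrightarrow> (\<forall>F. ent \<mu> (\<lambda>x. (F x)\<^sup>2) \<le> 2 * \<sigma>\<^sup>2 * measure_pmf.expectation \<mu> (grad_sq \<mu> F))"

definition ext_fam :: "('n::linorder \<Rightarrow> 'n \<Rightarrow> 'b::real_vector) \<Rightarrow> 'n \<Rightarrow> 'n \<Rightarrow> 'b" where
  "ext_fam t i j = (if i < j then t i j else if j < i then t j i else 0)"

definition dual_ball :: "('b::real_normed_vector \<Rightarrow>\<^sub>L real) set" where
  "dual_ball = {v. norm v \<le> 1}"

definition fT :: "('n::{finite,linorder} \<Rightarrow> 'n \<Rightarrow> 'b::real_normed_vector) set \<Rightarrow> ((real, 'n) vec) \<Rightarrow> real" where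
  "fT \<T> x = (SUP t\<in>\<T>. norm (\<Sum>(i,j)\<in>{(i,j). i < j}. (x $ i * x $ j) *\<^sub>R t i j))"

definition T1 :: "((real, 'n::{finite,linorder}) vec) pmf \<Rightarrow> ('n \<Rightarrow> 'n \<Rightarrow> 'b::real_normed_vector) set \<Rightarrow> real" where
  "T1 \<mu> \<T> = measure_pmf.expectation \<mu> (\<lambda>x. SUP t\<in>\<T>. SUP v\<in>dual_ball.
      sqrt (\<Sum>i\<in>UNIV. (\<Sum>j\<in>UNIV. x $ j * blinfun_apply v (ext_fam t i j))\<^sup>2))"

definition T2 :: "('n::{finite,linorder} \<Rightarrow> 'n \<Rightarrow> 'b::real_normed_vector) set \<Rightarrow> real" where
  "T2 \<T> = (SUP t\<in>\<T>. SUP v\<in>dual_ball.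
      onorm (\<lambda>y::(real, 'n) vec. (\<chi> i j. blinfun_apply v (ext_fam t i j)) *v y))"

end

theory Submission
  imports Defs
begin

(*
  The entropy method. Applying the d-LSI to exp (l g / 2) gives the modified inequality
  Ent (exp (l g)) <= sigma^2 l^2 / 2 * E [exp (l g) Gamma+ g], where Gamma+ g (x) is the
  conditional mean square of (g x - g X)+ given the other coordinates. If z differs from x only in
  coordinate i, a norming functional v of the chaos at x gives
  f x - f z <= (x_i - z_i) (A x)_i with the symmetric matrix A = (v t_ij), because the diagonal
  does not occur; hence Gamma+ f <= (b - a)^2 W^2 with W x = sup_{t,v} |A x| and E W = T1.
  The same computation for W itself gives Gamma+ W <= (b - a)^2 T2^2, so by Herbst's argument W is
  sub-Gaussian around T1, E W^2 <= 2 T1^2 + 12 kappa T2^2 with kappa = (b - a)^2 sigma^2, and W^2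
  is sub-gamma. The entropy duality E [Y h] <= Ent h + E h * ln E [exp Y] with Y = kappa l^2 W^2
  then yields Ent (exp (l f)) <= (4 kappa T1^2 + 24 kappa^2 T2^2) l^2 E [exp (l f)] for
  l <= 1 / (2 kappa T2), and Herbst's argument and a Chernoff bound with optimised l conclude.
*)

section \<open>A norming functional\<close>

text \<open>Graphs of norm-dominated linear functionals on subspaces, with value \<open>norm u\<close> at \<open>u\<close>;
  the condition on \<open>(0, a)\<close> makes the graph single-valued. Zorn's lemma yields a maximal such
  graph, and maximal graphs are total.\<close>
definition norming_graph :: "'b::real_normed_vector \<Rightarrow> ('b \<times> real) set \<Rightarrow> bool" where
  "norming_graph u G \<longleftrightarrow> (0, 0) \<in> G \<and> (\<forall>p\<in>G. \<forall>q\<in>G. p + q \<in> G) \<and> (\<forall>p\<in>G. \<forall>c. c *\<^sub>R p \<in> G)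
     \<and> (\<forall>a. (0, a) \<in> G \<longrightarrow> a = 0) \<and> (\<forall>x a. (x, a) \<in> G \<longrightarrow> a \<le> norm x) \<and> (u, norm u) \<in> G"

lemma norming_graph_zero: "norming_graph u G \<Longrightarrow> (0, 0) \<in> G"
  and norming_graph_add: "norming_graph u G \<Longrightarrow> p \<in> G \<Longrightarrow> q \<in> G \<Longrightarrow> p + q \<in> G"
  and norming_graph_scaleR: "norming_graph u G \<Longrightarrow> p \<in> G \<Longrightarrow> c *\<^sub>R p \<in> G"
  and norming_graph_at_zero: "norming_graph u G \<Longrightarrow> (0, a) \<in> G \<Longrightarrow> a = 0"
  and norming_graph_le_norm: "norming_graph u G \<Longrightarrow> (x, a) \<in> G \<Longrightarrow> a \<le> norm x"
  and norming_graph_at_u: "norming_graph u G \<Longrightarrow> (u, norm u) \<in> G"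
  unfolding norming_graph_def by simp_all

lemma norming_graph_unique:
  assumes "norming_graph u G" "(x, a) \<in> G" "(x, b) \<in> G"
  shows "a = b"
proof -
  have "(x, a) + (-1) *\<^sub>R (x, b) \<in> G"
    using assms by (intro norming_graph_add norming_graph_scaleR)
  thus ?thesis using norming_graph_at_zero[OF assms(1)] by fastforce
qed

lemma norming_graph_span: "norming_graph u {(s *\<^sub>R u, s * norm u) | s. True}"
  unfolding norming_graph_def
proof (intro conjI allI impI ballI)
  show "(0, 0) \<in> {(s *\<^sub>R u, s * norm u) | s. True}" by (intro CollectI exI[of _ 0]) simp
  show "(u, norm u) \<in> {(s *\<^sub>R u, s * norm u) | s. True}" by (intro CollectI exI[of _ 1]) simp
  fix p q assume "p \<in> {(s *\<^sub>R u, s * norm u) | s. True}" "q \<in> {(s *\<^sub>R u, s * norm u) | s. True}"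
  then obtain s r where "p = (s *\<^sub>R u, s * norm u)" "q = (r *\<^sub>R u, r * norm u)" by blast
  thus "p + q \<in> {(s *\<^sub>R u, s * norm u) | s. True}"
    by (intro CollectI exI[of _ "s + r"]) (simp add: scaleR_add_left distrib_right)
next
  fix p c assume "p \<in> {(s *\<^sub>R u, s * norm u) | s. True}"
  then obtain s where "p = (s *\<^sub>R u, s * norm u)" by blast
  thus "c *\<^sub>R p \<in> {(s *\<^sub>R u, s * norm u) | s. True}" by (intro CollectI exI[of _ "c * s"]) simp
next
  fix a assume "(0, a) \<in> {(s *\<^sub>R u, s * norm u) | s. True}"
  thus "a = 0" by auto
next
  fix x a assume "(x, a) \<in> {(s *\<^sub>R u, s * norm u) | s. True}"
  thus "a \<le> norm x" by (auto simp: mult_right_mono)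
qed

lemma norming_graph_Union_chain:
  assumes "C \<noteq> {}" "\<forall>G\<in>C. norming_graph u G" "\<forall>G\<in>C. \<forall>H\<in>C. G \<subseteq> H \<or> H \<subseteq> G"
  shows "norming_graph u (\<Union>C)"
  unfolding norming_graph_def
proof (intro conjI allI impI ballI)
  obtain G0 where "G0 \<in> C" using assms(1) by blast
  thus "(0, 0) \<in> \<Union>C" "(u, norm u) \<in> \<Union>C"
    using assms(2) norming_graph_zero norming_graph_at_u by blast+
next
  fix p q assume "p \<in> \<Union>C" "q \<in> \<Union>C"
  then obtain G H where GH: "G \<in> C" "H \<in> C" "p \<in> G" "q \<in> H" by blast
  with assms(3) have "p \<in> G \<union> H \<and> q \<in> G \<union> H \<and> (G \<union> H = G \<or> G \<union> H = H)" by blast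
  thus "p + q \<in> \<Union>C" using GH assms(2) norming_graph_add by (metis UnionI)
next
  fix p c assume "p \<in> \<Union>C"
  thus "c *\<^sub>R p \<in> \<Union>C" using assms(2) norming_graph_scaleR by blast
next
  fix a assume "(0, a) \<in> \<Union>C"
  thus "a = 0" using assms(2) norming_graph_at_zero by blast
next
  fix x a assume "(x, a) \<in> \<Union>C"
  thus "a \<le> norm x" using assms(2) norming_graph_le_norm by blast
qed

text \<open>The one-dimensional extension step of the Hahn--Banach theorem: the value \<open>c\<close> at the new
  vector \<open>y0\<close> must lie between these two bounds.\<close>
lemma norming_graph_extension_value:
  assumes M: "norming_graph u M"
  obtains c where "\<And>x a. (x, a) \<in> M \<Longrightarrow> a - norm (x - y0) \<le> c"
    and "\<And>x a. (x, a) \<in> M \<Longrightarrow> c \<le> norm (x + y0) - a"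
proof -
  define L where "L = {a - norm (x - y0) | x a. (x, a) \<in> M}"
  have ub: "l \<le> norm (x' + y0) - a'" if "l \<in> L" "(x', a') \<in> M" for l x' a'
  proof -
    obtain x a where xa: "(x, a) \<in> M" "l = a - norm (x - y0)" using \<open>l \<in> L\<close> unfolding L_def by blast
    have "(x, a) + (x', a') \<in> M" using M xa that by (intro norming_graph_add)
    hence "a + a' \<le> norm ((x - y0) + (x' + y0))" using M norming_graph_le_norm by fastforce
    also have "\<dots> \<le> norm (x - y0) + norm (x' + y0)" by (rule norm_triangle_ineq)
    finally show ?thesis using xa by simp
  qed
  have "L \<noteq> {}" using norming_graph_zero[OF M] unfolding L_def by blast
  moreover have "bdd_above L"
    using ub[of _ 0 0] norming_graph_zero[OF M] by (intro bdd_aboveI[of _ "norm y0"]) auto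
  ultimately show ?thesis
    using ub by (intro that[of "Sup L"] cSup_upper cSup_least) (auto simp: L_def)
qed

lemma norming_graph_extension_le_norm:
  fixes y0 :: "'b::real_normed_vector"
  assumes M: "norming_graph u M" and xa: "(x, a) \<in> M"
    and lo: "\<And>x a. (x, a) \<in> M \<Longrightarrow> a - norm (x - y0) \<le> c"
    and hi: "\<And>x a. (x, a) \<in> M \<Longrightarrow> c \<le> norm (x + y0) - a"
  shows "a + s * c \<le> norm (x + s *\<^sub>R y0)"
proof (cases "0::real" s rule: linorder_cases)
  case equal thus ?thesis using norming_graph_le_norm[OF M xa] by simp
next
  case less
  have "(1 / s) *\<^sub>R (x, a) \<in> M" using M xa by (intro norming_graph_scaleR)
  hence "c \<le> norm ((1 / s) *\<^sub>R x + y0) - a / s" using hi by simp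
  hence "s * c \<le> s * norm ((1 / s) *\<^sub>R x + y0) - a" using less by (simp add: field_simps)
  also have "s * norm ((1 / s) *\<^sub>R x + y0) = norm (s *\<^sub>R ((1 / s) *\<^sub>R x + y0))" using less by simp
  also have "s *\<^sub>R ((1 / s) *\<^sub>R x + y0) = x + s *\<^sub>R y0" using less by (simp add: scaleR_add_right)
  finally show ?thesis by simp
next
  case greater
  have "(- 1 / s) *\<^sub>R (x, a) \<in> M" using M xa by (intro norming_graph_scaleR)
  hence "- a / s - norm ((- 1 / s) *\<^sub>R x - y0) \<le> c" using lo by simp
  hence "a + s * c \<le> (- s) * norm ((- 1 / s) *\<^sub>R x - y0)" using greater by (simp add: field_simps)
  also have "\<dots> = norm ((- s) *\<^sub>R ((- 1 / s) *\<^sub>R x - y0))" using greater by simp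
  also have "(- s) *\<^sub>R ((- 1 / s) *\<^sub>R x - y0) = x + s *\<^sub>R y0" using greater by (simp add: scaleR_diff_right)
  finally show ?thesis by simp
qed

lemma norming_graph_extension_at_zero:
  assumes M: "norming_graph u M" and y0: "\<forall>a. (y0, a) \<notin> M"
    and xa: "(x, a) \<in> M" "x + s *\<^sub>R y0 = 0"
  shows "a + s * c = 0"
proof (cases "s = 0")
  case True thus ?thesis using xa norming_graph_at_zero[OF M] by auto
next
  case False
  have "(- 1 / s) *\<^sub>R (x, a) \<in> M" using M xa by (intro norming_graph_scaleR)
  moreover have "x = - (s *\<^sub>R y0)" using xa(2) by (simp add: eq_neg_iff_add_eq_0)
  hence "(- 1 / s) *\<^sub>R x = y0" using False by simp
  ultimately show ?thesis using y0 by auto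
qed

lemma norming_graph_extension:
  assumes M: "norming_graph u M" and y0: "\<forall>a. (y0, a) \<notin> M"
    and lo: "\<And>x a. (x, a) \<in> M \<Longrightarrow> a - norm (x - y0) \<le> c"
    and hi: "\<And>x a. (x, a) \<in> M \<Longrightarrow> c \<le> norm (x + y0) - a"
  shows "norming_graph u {(x + s *\<^sub>R y0, a + s * c) | x a s. (x, a) \<in> M}"
proof -
  define M' where "M' = {(x + s *\<^sub>R y0, a + s * c) | x a s. (x, a) \<in> M}"
  have sub: "M \<subseteq> M'"
    unfolding M'_def by (force intro: exI[of _ 0])
  show ?thesis unfolding M'_def[symmetric] norming_graph_def
  proof (intro conjI allI impI ballI)
    show "(0, 0) \<in> M'" "(u, norm u) \<in> M'"
      using sub norming_graph_zero[OF M] norming_graph_at_u[OF M] by blast+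
  next
    fix p q assume "p \<in> M'" "q \<in> M'"
    then obtain x a s x' a' s' where "p = (x + s *\<^sub>R y0, a + s * c)" "(x, a) \<in> M"
       "q = (x' + s' *\<^sub>R y0, a' + s' * c)" "(x', a') \<in> M" unfolding M'_def by blast
    moreover have "(x, a) + (x', a') \<in> M" using M calculation by (intro norming_graph_add)
    ultimately show "p + q \<in> M'" unfolding M'_def
      by (intro CollectI exI[of _ "x + x'"] exI[of _ "a + a'"] exI[of _ "s + s'"])
         (simp add: algebra_simps)
  next
    fix p r assume "p \<in> M'"
    then obtain x a s where "p = (x + s *\<^sub>R y0, a + s * c)" "(x, a) \<in> M" unfolding M'_def by blast
    moreover have "r *\<^sub>R (x, a) \<in> M" using M calculation by (intro norming_graph_scaleR)
    ultimately show "r *\<^sub>R p \<in> M'" unfolding M'_def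
      by (intro CollectI exI[of _ "r *\<^sub>R x"] exI[of _ "r * a"] exI[of _ "r * s"])
         (simp add: algebra_simps)
  next
    fix b assume "(0, b) \<in> M'"
    then obtain x a s where "(x, a) \<in> M" "x + s *\<^sub>R y0 = 0" "b = a + s * c"
      unfolding M'_def by auto
    thus "b = 0" using norming_graph_extension_at_zero[OF M y0, of x a s c] by simp
  next
    fix z b assume "(z, b) \<in> M'"
    thus "b \<le> norm z" unfolding M'_def using norming_graph_extension_le_norm[OF M _ lo hi] by blast
  qed
qed

lemma norming_graph_extend:
  assumes M: "norming_graph u M" and y0: "\<forall>a. (y0, a) \<notin> M"
  obtains M' where "norming_graph u M'" "M \<subset> M'"
proof -
  obtain c where lo: "\<And>x a. (x, a) \<in> M \<Longrightarrow> a - norm (x - y0) \<le> c"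
    and hi: "\<And>x a. (x, a) \<in> M \<Longrightarrow> c \<le> norm (x + y0) - a"
    using norming_graph_extension_value[OF M] by blast
  define M' where "M' = {(x + s *\<^sub>R y0, a + s * c) | x a s. (x, a) \<in> M}"
  have "M \<subseteq> M'"
    unfolding M'_def by (force intro: exI[of _ 0])
  moreover have "(y0, c) \<in> M'"
    using norming_graph_zero[OF M] unfolding M'_def by (intro CollectI exI[of _ 0] exI[of _ 1]) simp
  ultimately have "M \<subset> M'" using y0 by blast
  thus ?thesis using that norming_graph_extension[OF M y0 lo hi] unfolding M'_def by blast
qed

theorem exists_norming_functional:
  fixes u :: "'b::real_normed_vector"
  obtains \<phi> :: "'b \<Rightarrow>\<^sub>L real" where "norm \<phi> \<le> 1" "\<phi> u = norm u"
proof -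
  have "\<exists>M\<in>{G. norming_graph u G}. \<forall>X\<in>{G. norming_graph u G}. M \<subseteq> X \<longrightarrow> X = M"
  proof (rule subset_Zorn_nonempty)
    fix C assume "C \<noteq> {}" "subset.chain {G. norming_graph u G} C"
    thus "\<Union>C \<in> {G. norming_graph u G}"
      using norming_graph_Union_chain[of C u] by (auto simp: subset.chain_def)
  qed (use norming_graph_span in blast)
  then obtain M where M: "norming_graph u M" and max: "\<And>X. norming_graph u X \<Longrightarrow> M \<subseteq> X \<Longrightarrow> X = M"
    by blast
  have "\<exists>a. (y, a) \<in> M" for y
    using norming_graph_extend[OF M, of y] max by blast
  then obtain f where fM: "\<And>y. (y, f y) \<in> M" by metis
  have fval: "(y, a) \<in> M \<Longrightarrow> f y = a" for y a using norming_graph_unique[OF M] fM by blast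
  have add: "f (x + y) = f x + f y" for x y
    using norming_graph_add[OF M fM fM] fval by simp
  have scale: "f (r *\<^sub>R x) = r * f x" for r x
    using norming_graph_scaleR[OF M fM] fval by simp
  have abs_le: "\<bar>f y\<bar> \<le> norm y" for y
    using norming_graph_le_norm[OF M fM, of y] norming_graph_le_norm[OF M fM, of "- y"] scale[of "- 1" y]
    by simp
  have bl: "bounded_linear f"
    by (rule bounded_linear_intro[where K = 1]) (use add scale abs_le in auto)
  show ?thesis
  proof
    show "norm (Blinfun f) \<le> 1"
      by (rule norm_blinfun_bound) (use bl abs_le in \<open>auto simp: bounded_linear_Blinfun_apply\<close>)
    show "Blinfun f u = norm u"
      using bl fval norming_graph_at_u[OF M] by (simp add: bounded_linear_Blinfun_apply)
  qed
qed

section \<open>Expectations under finitely supported distributions\<close>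

lemma expectation_finite_pmf:
  assumes "finite (set_pmf p)"
  shows "measure_pmf.expectation p f = (\<Sum>x\<in>set_pmf p. pmf p x * (f x :: real))"
  by (subst integral_measure_pmf_real[of "set_pmf p"]) (use assms in \<open>auto simp: mult.commute\<close>)

lemma expectation_cong_set_pmf:
  assumes "\<And>x. x \<in> set_pmf p \<Longrightarrow> f x = g x"
  shows "measure_pmf.expectation p f = measure_pmf.expectation p (g :: _ \<Rightarrow> real)"
  using assms by (intro integral_cong_AE) (auto simp: AE_measure_pmf_iff)

lemma expectation_nonneg_set_pmf:
  assumes "\<And>x. x \<in> set_pmf p \<Longrightarrow> 0 \<le> f x"
  shows "0 \<le> measure_pmf.expectation p (f :: _ \<Rightarrow> real)"
  using assms by (intro integral_nonneg_AE) (auto simp: AE_measure_pmf_iff)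

lemma expectation_pos_finite_pmf:
  assumes fin: "finite (set_pmf p)" and pos: "\<And>x. x \<in> set_pmf p \<Longrightarrow> 0 < f x"
  shows "0 < measure_pmf.expectation p (f :: _ \<Rightarrow> real)"
proof -
  obtain x0 where "x0 \<in> set_pmf p" using set_pmf_not_empty[of p] by blast
  thus ?thesis
    unfolding expectation_finite_pmf[OF fin] using pos
    by (intro sum_pos2[OF fin]) (auto simp: pmf_positive less_imp_le)
qed

lemma expectation_mono_finite_pmf:
  assumes "finite (set_pmf p)" "\<And>x. x \<in> set_pmf p \<Longrightarrow> f x \<le> g x"
  shows "measure_pmf.expectation p f \<le> measure_pmf.expectation p (g :: _ \<Rightarrow> real)"
  using assms by (intro integral_mono_AE integrable_measure_pmf_finite) (auto simp: AE_measure_pmf_iff)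

lemma expectation_le_const_finite_pmf:
  assumes "finite (set_pmf p)" "\<And>x. x \<in> set_pmf p \<Longrightarrow> f x \<le> c"
  shows "measure_pmf.expectation p f \<le> (c :: real)"
  using expectation_mono_finite_pmf[OF assms(1), of f "\<lambda>_. c"] assms(2) by simp

lemma expectation_add_finite_pmf:
  assumes "finite (set_pmf p)"
  shows "measure_pmf.expectation p (\<lambda>x. f x + g x) =
    measure_pmf.expectation p f + measure_pmf.expectation p (g :: _ \<Rightarrow> real)"
  using assms by (intro Bochner_Integration.integral_add integrable_measure_pmf_finite)

lemma expectation_sum_finite_pmf:
  assumes "finite (set_pmf p)"
  shows "measure_pmf.expectation p (\<lambda>x. \<Sum>i\<in>I. f i x) =
    (\<Sum>i\<in>I. measure_pmf.expectation p (f i :: _ \<Rightarrow> real))"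
  using assms by (intro Bochner_Integration.integral_sum integrable_measure_pmf_finite)

lemma variance_eq_expectation_pos_part_sq:
  fixes F :: "'a \<Rightarrow> real"
  assumes fin: "finite (set_pmf p)"
  shows "measure_pmf.variance p F =
    measure_pmf.expectation p (\<lambda>y. measure_pmf.expectation p (\<lambda>z. (max (F y - F z) 0)\<^sup>2))"
proof -
  let ?E = "measure_pmf.expectation p"
  define D where "D y z = (max (F y - F z) 0)\<^sup>2" for y z
  have swap: "?E (\<lambda>y. ?E (\<lambda>z. D y z)) = ?E (\<lambda>y. ?E (\<lambda>z. D z y))"
    unfolding expectation_finite_pmf[OF fin] sum_distrib_left
    by (subst sum.swap) (simp add: mult_ac)
  have D_sym: "D y z + D z y = (F y - F z)\<^sup>2" for y z
    unfolding D_def by (cases "F y \<le> F z") (auto simp: max_def power2_eq_square algebra_simps)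
  have "2 * ?E (\<lambda>y. ?E (\<lambda>z. D y z)) = ?E (\<lambda>y. ?E (\<lambda>z. D y z)) + ?E (\<lambda>y. ?E (\<lambda>z. D z y))"
    using swap by simp
  also have "\<dots> = ?E (\<lambda>y. ?E (\<lambda>z. (F y - F z)\<^sup>2))"
    by (simp add: expectation_add_finite_pmf[OF fin] D_sym[symmetric])
  also have "\<dots> = ?E (\<lambda>y. (F y)\<^sup>2 - 2 * ?E F * F y + ?E (\<lambda>z. (F z)\<^sup>2))"
    by (intro expectation_cong_set_pmf)
      (simp add: expectation_finite_pmf[OF fin] power2_diff algebra_simps sum.distrib sum_subtractf
        sum_distrib_left[symmetric] sum_distrib_right[symmetric] sum_pmf_eq_1 fin,
       simp add: sum_distrib_left mult_ac)
  also have "\<dots> = 2 * measure_pmf.variance p F"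
    unfolding measure_pmf.variance_eq[OF integrable_measure_pmf_finite[OF fin]
        integrable_measure_pmf_finite[OF fin]]
    by (simp add: expectation_add_finite_pmf[OF fin] Bochner_Integration.integral_diff
        integrable_measure_pmf_finite[OF fin] power2_eq_square)
  finally show ?thesis unfolding D_def by simp
qed

section \<open>The modified logarithmic Sobolev inequality\<close>

abbreviation coord_fiber :: "'n \<Rightarrow> (real, 'n::finite) vec \<Rightarrow> (real, 'n) vec set" where
  "coord_fiber i x \<equiv> {y. \<forall>j. j \<noteq> i \<longrightarrow> y $ j = x $ j}"

lemma set_pmf_cond_coord_fiber:
  assumes "x \<in> set_pmf \<mu>"
  shows "set_pmf (cond_pmf \<mu> (coord_fiber i x)) = set_pmf \<mu> \<inter> coord_fiber i x"
  using assms by (intro set_cond_pmf) auto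

lemma finite_set_pmf_cond_coord_fiber:
  assumes "finite (set_pmf \<mu>)" "x \<in> set_pmf \<mu>"
  shows "finite (set_pmf (cond_pmf \<mu> (coord_fiber i x)))"
  using assms set_pmf_cond_coord_fiber[OF assms(2)] by simp

lemma expectation_cond_coord_fiber:
  fixes \<mu> :: "(real, 'n::finite) vec pmf" and k :: "(real, 'n) vec \<Rightarrow> real"
  assumes fin: "finite (set_pmf \<mu>)"
  shows "measure_pmf.expectation \<mu> (\<lambda>x. measure_pmf.expectation (cond_pmf \<mu> (coord_fiber i x)) k)
       = measure_pmf.expectation \<mu> k"
proof -
  have "bind_pmf \<mu> (\<lambda>x. cond_pmf \<mu> (coord_fiber i x)) = \<mu>"
  proof (rule bind_cond_pmf_cancel[where R = "\<lambda>x y. \<forall>j. j \<noteq> i \<longrightarrow> y $ j = x $ j"])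
    show "measure \<mu> (coord_fiber i x) = measure \<mu> {x. \<forall>j. j \<noteq> i \<longrightarrow> y $ j = x $ j}"
      if "\<forall>j. j \<noteq> i \<longrightarrow> y $ j = x $ j" for x y
      using that by (intro arg_cong[where f = "measure \<mu>"]) auto
  qed auto
  hence "measure_pmf.expectation \<mu> k =
      measure_pmf.expectation (bind_pmf \<mu> (\<lambda>x. cond_pmf \<mu> (coord_fiber i x))) k"
    by simp
  also have "\<dots> = (\<Sum>a\<in>set_pmf \<mu>. pmf \<mu> a *\<^sub>R
      measure_pmf.expectation (cond_pmf \<mu> (coord_fiber i a)) k)"
    by (rule pmf_expectation_bind) (use fin finite_set_pmf_cond_coord_fiber in auto)
  finally show ?thesis by (simp add: expectation_finite_pmf[OF fin])
qed

definition pos_grad_sq :: "(real, 'n::finite) vec pmf \<Rightarrow> ((real, 'n) vec \<Rightarrow> real) \<Rightarrow> (real, 'n) vec \<Rightarrow> real" where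
  "pos_grad_sq \<mu> g x =
    (\<Sum>i\<in>UNIV. measure_pmf.expectation (cond_pmf \<mu> (coord_fiber i x)) (\<lambda>z. (max (g x - g z) 0)\<^sup>2))"

lemma pos_part_exp_diff_sq_le:
  fixes l u v :: real
  assumes "0 \<le> l"
  shows "(max (exp (l * u / 2) - exp (l * v / 2)) 0)\<^sup>2 \<le> l\<^sup>2 / 4 * exp (l * u) * (max (u - v) 0)\<^sup>2"
proof (cases "l * v / 2 < l * u / 2")
  case False
  thus ?thesis by simp
next
  case True
  define a where "a = l * u / 2"
  define b where "b = l * v / 2"
  have ab: "b < a" using True a_def b_def by simp
  have uv: "v < u" using True assms by (cases "l = 0") (auto simp: mult_less_cancel_left)
  have "exp a * (1 + (b - a)) \<le> exp b"
    using exp_ge_add_one_self[of "b - a"] by (simp add: exp_diff field_simps)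
  hence d: "exp a - exp b \<le> (a - b) * exp a" by (simp add: algebra_simps)
  have "(max (exp a - exp b) 0)\<^sup>2 = (exp a - exp b)\<^sup>2" using ab by simp
  also have "\<dots> \<le> ((a - b) * exp a)\<^sup>2" using d ab by (intro power_mono) auto
  also have "\<dots> = l\<^sup>2 / 4 * exp (l * u) * (max (u - v) 0)\<^sup>2"
  proof -
    have "(exp a)\<^sup>2 = exp (l * u)" unfolding a_def by (simp add: power2_eq_square exp_add[symmetric])
    moreover have "(a - b)\<^sup>2 = l\<^sup>2 / 4 * (u - v)\<^sup>2"
      unfolding a_def b_def by (simp add: power2_eq_square algebra_simps)
    ultimately show ?thesis using uv by (simp add: power_mult_distrib)
  qed
  finally show ?thesis unfolding a_def b_def .
qed

lemma expectation_d_sq_exp_le: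
  fixes \<mu> :: "(real, 'n::finite) vec pmf" and g :: "(real, 'n) vec \<Rightarrow> real"
  assumes fin: "finite (set_pmf \<mu>)" and l: "0 \<le> l"
  shows "measure_pmf.expectation \<mu> (d_sq \<mu> (\<lambda>x. exp (l * g x / 2)) i) \<le> l\<^sup>2 / 4 *
    measure_pmf.expectation \<mu> (\<lambda>x. exp (l * g x) *
      measure_pmf.expectation (cond_pmf \<mu> (coord_fiber i x)) (\<lambda>z. (max (g x - g z) 0)\<^sup>2))"
proof -
  define h where "h = (\<lambda>y. l\<^sup>2 / 4 * (exp (l * g y) *
    measure_pmf.expectation (cond_pmf \<mu> (coord_fiber i y)) (\<lambda>z. (max (g y - g z) 0)\<^sup>2)))"
  have "d_sq \<mu> (\<lambda>x. exp (l * g x / 2)) i x \<le> measure_pmf.expectation (cond_pmf \<mu> (coord_fiber i x)) h"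
    if x: "x \<in> set_pmf \<mu>" for x
  proof -
    define \<nu> where "\<nu> = cond_pmf \<mu> (coord_fiber i x)"
    have fin_\<nu>: "finite (set_pmf \<nu>)" unfolding \<nu>_def using finite_set_pmf_cond_coord_fiber[OF fin x] .
    have same: "cond_pmf \<mu> (coord_fiber i y) = \<nu>" if "y \<in> set_pmf \<nu>" for y
      using that set_pmf_cond_coord_fiber[OF x] unfolding \<nu>_def by (intro arg_cong[where f = "cond_pmf \<mu>"]) auto
    have "d_sq \<mu> (\<lambda>x. exp (l * g x / 2)) i x = measure_pmf.expectation \<nu>
        (\<lambda>y. measure_pmf.expectation \<nu> (\<lambda>z. (max (exp (l * g y / 2) - exp (l * g z / 2)) 0)\<^sup>2))"
      unfolding d_sq_def \<nu>_def by (rule variance_eq_expectation_pos_part_sq) (use fin_\<nu> in \<open>simp add: \<nu>_def\<close>)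
    also have "\<dots> \<le> measure_pmf.expectation \<nu> (\<lambda>y. measure_pmf.expectation \<nu>
        (\<lambda>z. l\<^sup>2 / 4 * exp (l * g y) * (max (g y - g z) 0)\<^sup>2))"
      by (intro expectation_mono_finite_pmf fin_\<nu> pos_part_exp_diff_sq_le l)
    also have "\<dots> = measure_pmf.expectation \<nu> h"
      by (intro expectation_cong_set_pmf) (simp add: h_def same mult_ac)
    finally show ?thesis unfolding \<nu>_def .
  qed
  hence "measure_pmf.expectation \<mu> (d_sq \<mu> (\<lambda>x. exp (l * g x / 2)) i) \<le>
      measure_pmf.expectation \<mu> (\<lambda>x. measure_pmf.expectation (cond_pmf \<mu> (coord_fiber i x)) h)"
    by (intro expectation_mono_finite_pmf fin)
  also have "\<dots> = measure_pmf.expectation \<mu> h" by (rule expectation_cond_coord_fiber[OF fin])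
  finally show ?thesis by (simp add: h_def)
qed

text \<open>The d-LSI applied to \<open>exp (l * g / 2)\<close>.\<close>
lemma ent_exp_le_pos_grad_sq:
  fixes \<mu> :: "(real, 'n::finite) vec pmf" and g :: "(real, 'n) vec \<Rightarrow> real"
  assumes fin: "finite (set_pmf \<mu>)" and lsi: "d_LSI \<mu> \<sigma>" and l: "0 \<le> l"
  shows "ent \<mu> (\<lambda>x. exp (l * g x)) \<le>
    \<sigma>\<^sup>2 * l\<^sup>2 / 2 * measure_pmf.expectation \<mu> (\<lambda>x. exp (l * g x) * pos_grad_sq \<mu> g x)"
proof -
  define F where "F x = exp (l * g x / 2)" for x
  have "(\<lambda>x. exp (l * g x)) = (\<lambda>x. (F x)\<^sup>2)"
    unfolding F_def by (simp add: power2_eq_square exp_add[symmetric])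
  hence ent: "ent \<mu> (\<lambda>x. exp (l * g x)) \<le> 2 * \<sigma>\<^sup>2 * measure_pmf.expectation \<mu> (grad_sq \<mu> F)"
    using lsi unfolding d_LSI_def by simp
  have "measure_pmf.expectation \<mu> (grad_sq \<mu> F) = (\<Sum>i\<in>UNIV. measure_pmf.expectation \<mu> (d_sq \<mu> F i))"
    unfolding grad_sq_def by (rule expectation_sum_finite_pmf[OF fin])
  also have "\<dots> \<le> (\<Sum>i\<in>UNIV. l\<^sup>2 / 4 * measure_pmf.expectation \<mu> (\<lambda>x. exp (l * g x) *
      measure_pmf.expectation (cond_pmf \<mu> (coord_fiber i x)) (\<lambda>z. (max (g x - g z) 0)\<^sup>2)))"
    unfolding F_def by (intro sum_mono expectation_d_sq_exp_le fin l)
  also have "\<dots> = l\<^sup>2 / 4 * measure_pmf.expectation \<mu> (\<lambda>x. exp (l * g x) * pos_grad_sq \<mu> g x)"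
    unfolding pos_grad_sq_def sum_distrib_left
    by (simp add: expectation_sum_finite_pmf[OF fin] sum_distrib_left)
  finally have "2 * \<sigma>\<^sup>2 * measure_pmf.expectation \<mu> (grad_sq \<mu> F) \<le> 2 * \<sigma>\<^sup>2 *
      (l\<^sup>2 / 4 * measure_pmf.expectation \<mu> (\<lambda>x. exp (l * g x) * pos_grad_sq \<mu> g x))"
    by (intro mult_left_mono) auto
  with ent show ?thesis by (simp add: algebra_simps)
qed

lemma ent_exp_le_of_pos_grad_sq_le:
  fixes \<mu> :: "(real, 'n::finite) vec pmf" and g :: "(real, 'n) vec \<Rightarrow> real"
  assumes fin: "finite (set_pmf \<mu>)" and lsi: "d_LSI \<mu> \<sigma>" and l: "0 \<le> l"
    and bound: "\<And>x. x \<in> set_pmf \<mu> \<Longrightarrow> pos_grad_sq \<mu> g x \<le> h x"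
  shows "ent \<mu> (\<lambda>x. exp (l * g x)) \<le> \<sigma>\<^sup>2 * l\<^sup>2 / 2 * measure_pmf.expectation \<mu> (\<lambda>x. exp (l * g x) * h x)"
proof -
  have "measure_pmf.expectation \<mu> (\<lambda>x. exp (l * g x) * pos_grad_sq \<mu> g x) \<le>
      measure_pmf.expectation \<mu> (\<lambda>x. exp (l * g x) * h x)"
    using bound by (intro expectation_mono_finite_pmf fin mult_left_mono) auto
  thus ?thesis
    using ent_exp_le_pos_grad_sq[OF fin lsi l, of g] mult_left_mono[of _ _ "\<sigma>\<^sup>2 * l\<^sup>2 / 2"]
    by (meson order_trans divide_nonneg_nonneg mult_nonneg_nonneg zero_le_numeral zero_le_power2)
qed

section \<open>Bounds on \<open>\<Gamma>\<^sup>+\<close>\<close>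

lemma le_of_le_add_mult_pos:
  fixes a b C :: real
  assumes "\<And>e. 0 < e \<Longrightarrow> e \<le> 1 \<Longrightarrow> a \<le> b + C * e"
  shows "a \<le> b"
proof (rule field_le_epsilon)
  fix d :: real assume d: "0 < d"
  define e where "e = min 1 (d / (\<bar>C\<bar> + 1))"
  have e: "0 < e" "e \<le> 1" using d by (auto simp: e_def)
  have "C * e \<le> \<bar>C\<bar> * e" using e by (simp add: mult_right_mono)
  also have "\<dots> \<le> \<bar>C\<bar> * (d / (\<bar>C\<bar> + 1))" by (intro mult_left_mono) (auto simp: e_def)
  also have "\<dots> \<le> d" using d by (simp add: field_simps)
  finally show "a \<le> b + d" using assms[OF e] by simp
qed

text \<open>The slack \<open>e\<close> lets \<open>r\<close> come from a near-maximiser of a supremum.\<close>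
lemma pos_grad_sq_le_of_increments:
  fixes \<mu> :: "(real, 'n::finite) vec pmf"
  assumes fin: "finite (set_pmf \<mu>)" and x: "x \<in> set_pmf \<mu>" and D: "0 \<le> D" and K: "0 \<le> K"
    and incr: "\<And>e. 0 < e \<Longrightarrow> \<exists>r. (\<Sum>i\<in>UNIV. (r i)\<^sup>2) \<le> R \<and> (\<forall>i. \<bar>r i\<bar> \<le> K) \<and>
      (\<forall>i z. z \<in> set_pmf \<mu> \<longrightarrow> z \<in> coord_fiber i x \<longrightarrow> g x - g z \<le> e + D * \<bar>r i\<bar>)"
  shows "pos_grad_sq \<mu> g x \<le> D\<^sup>2 * R"
proof (rule le_of_le_add_mult_pos[where C = "real CARD('n) * (2 * D * K + 1)"])
  fix e :: real assume e: "0 < e" "e \<le> 1"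
  obtain r where r: "(\<Sum>i\<in>UNIV. (r i)\<^sup>2) \<le> R" "\<And>i. \<bar>r i\<bar> \<le> K"
    "\<And>i z. z \<in> set_pmf \<mu> \<Longrightarrow> z \<in> coord_fiber i x \<Longrightarrow> g x - g z \<le> e + D * \<bar>r i\<bar>"
    using incr[OF e(1)] by blast
  have "measure_pmf.expectation (cond_pmf \<mu> (coord_fiber i x)) (\<lambda>z. (max (g x - g z) 0)\<^sup>2)
      \<le> (e + D * \<bar>r i\<bar>)\<^sup>2" for i
  proof (rule expectation_le_const_finite_pmf[OF finite_set_pmf_cond_coord_fiber[OF fin x]])
    fix z assume "z \<in> set_pmf (cond_pmf \<mu> (coord_fiber i x))"
    hence "g x - g z \<le> e + D * \<bar>r i\<bar>" using r(3) set_pmf_cond_coord_fiber[OF x] by blast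
    thus "(max (g x - g z) 0)\<^sup>2 \<le> (e + D * \<bar>r i\<bar>)\<^sup>2" using e D by (intro power_mono) auto
  qed
  also have "(e + D * \<bar>r i\<bar>)\<^sup>2 \<le> D\<^sup>2 * (r i)\<^sup>2 + (2 * D * K + 1) * e" for i
  proof -
    have "e * e \<le> 1 * e" "e * (D * \<bar>r i\<bar>) \<le> e * (D * K)"
      using e D r(2)[of i] by (auto intro!: mult_mono)
    thus ?thesis by (simp add: power2_eq_square algebra_simps)
  qed
  finally have "pos_grad_sq \<mu> g x \<le> (\<Sum>i\<in>UNIV. D\<^sup>2 * (r i)\<^sup>2 + (2 * D * K + 1) * e)"
    unfolding pos_grad_sq_def by (intro sum_mono)
  also have "\<dots> \<le> D\<^sup>2 * R + real CARD('n) * (2 * D * K + 1) * e"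
    using r(1) by (simp add: sum.distrib sum_distrib_left[symmetric] mult_left_mono)
  finally show "pos_grad_sq \<mu> g x \<le> D\<^sup>2 * R + real CARD('n) * (2 * D * K + 1) * e" .
qed

lemma pos_part_diff_sq_sq_le:
  fixes p q :: real
  assumes "0 \<le> p" "0 \<le> q"
  shows "(max (p\<^sup>2 - q\<^sup>2) 0)\<^sup>2 \<le> 4 * p\<^sup>2 * (max (p - q) 0)\<^sup>2"
proof (cases "p \<le> q")
  case True
  hence "p\<^sup>2 \<le> q\<^sup>2" using assms by (intro power_mono) auto
  thus ?thesis by simp
next
  case False
  have "p\<^sup>2 - q\<^sup>2 = (p - q) * (p + q)" by (simp add: power2_eq_square algebra_simps)
  also have "\<dots> \<le> (p - q) * (2 * p)" using False assms by (intro mult_left_mono) auto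
  finally have "p\<^sup>2 - q\<^sup>2 \<le> (p - q) * (2 * p)" .
  moreover have "0 \<le> p\<^sup>2 - q\<^sup>2" using False assms by (simp add: power_mono)
  ultimately have "(max (p\<^sup>2 - q\<^sup>2) 0)\<^sup>2 \<le> ((p - q) * (2 * p))\<^sup>2" by (simp add: power_mono)
  also have "\<dots> = 4 * p\<^sup>2 * (max (p - q) 0)\<^sup>2" using False by (simp add: power_mult_distrib)
  finally show ?thesis .
qed

lemma pos_grad_sq_sq_le:
  fixes \<mu> :: "(real, 'n::finite) vec pmf"
  assumes fin: "finite (set_pmf \<mu>)" and x: "x \<in> set_pmf \<mu>" and nonneg: "\<And>y. 0 \<le> g y"
  shows "pos_grad_sq \<mu> (\<lambda>y. (g y)\<^sup>2) x \<le> 4 * (g x)\<^sup>2 * pos_grad_sq \<mu> g x"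
  unfolding pos_grad_sq_def sum_distrib_left
proof (rule sum_mono)
  fix i
  have fin_i: "finite (set_pmf (cond_pmf \<mu> (coord_fiber i x)))"
    by (rule finite_set_pmf_cond_coord_fiber[OF fin x])
  show "measure_pmf.expectation (cond_pmf \<mu> (coord_fiber i x)) (\<lambda>z. (max ((g x)\<^sup>2 - (g z)\<^sup>2) 0)\<^sup>2)
      \<le> 4 * (g x)\<^sup>2 * measure_pmf.expectation (cond_pmf \<mu> (coord_fiber i x)) (\<lambda>z. (max (g x - g z) 0)\<^sup>2)"
    using expectation_mono_finite_pmf[OF fin_i, of "\<lambda>z. (max ((g x)\<^sup>2 - (g z)\<^sup>2) 0)\<^sup>2"
        "\<lambda>z. 4 * (g x)\<^sup>2 * (max (g x - g z) 0)\<^sup>2"] pos_part_diff_sq_sq_le[OF nonneg nonneg]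
    by simp
qed

section \<open>The Herbst argument\<close>

definition mgf :: "'a pmf \<Rightarrow> ('a \<Rightarrow> real) \<Rightarrow> real \<Rightarrow> real" where
  "mgf \<mu> g l = measure_pmf.expectation \<mu> (\<lambda>x. exp (l * g x))"

definition mgf_deriv :: "'a pmf \<Rightarrow> ('a \<Rightarrow> real) \<Rightarrow> real \<Rightarrow> real" where
  "mgf_deriv \<mu> g l = measure_pmf.expectation \<mu> (\<lambda>x. g x * exp (l * g x))"

lemma mgf_pos: "finite (set_pmf \<mu>) \<Longrightarrow> 0 < mgf \<mu> g l"
  unfolding mgf_def by (rule expectation_pos_finite_pmf) simp_all

lemma has_real_derivative_mgf:
  assumes fin: "finite (set_pmf \<mu>)"
  shows "(mgf \<mu> g has_real_derivative mgf_deriv \<mu> g l) (at l)"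
proof -
  have mgf: "mgf \<mu> g = (\<lambda>l. \<Sum>x\<in>set_pmf \<mu>. pmf \<mu> x * exp (l * g x))"
    unfolding mgf_def expectation_finite_pmf[OF fin] ..
  have deriv: "mgf_deriv \<mu> g l = (\<Sum>x\<in>set_pmf \<mu>. pmf \<mu> x * (exp (l * g x) * g x))"
    unfolding mgf_deriv_def expectation_finite_pmf[OF fin] by (simp add: mult_ac)
  show ?thesis unfolding mgf deriv by (intro DERIV_sum) (auto intro!: derivative_eq_intros)
qed

lemma has_real_derivative_ln_mgf:
  assumes fin: "finite (set_pmf \<mu>)"
  shows "((\<lambda>l. ln (mgf \<mu> g l)) has_real_derivative mgf_deriv \<mu> g l / mgf \<mu> g l) (at l)"
  using DERIV_chain2[OF DERIV_ln_divide has_real_derivative_mgf[OF fin]] mgf_pos[OF fin] by simp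

lemma ent_exp_eq_mgf:
  assumes fin: "finite (set_pmf \<mu>)"
  shows "ent \<mu> (\<lambda>x. exp (l * g x)) = l * mgf_deriv \<mu> g l - mgf \<mu> g l * ln (mgf \<mu> g l)"
proof -
  have "(\<lambda>x. xlogx (exp (l * g x))) = (\<lambda>x. l * (g x * exp (l * g x)))"
    by (simp add: xlogx_def mult_ac)
  thus ?thesis
    using mgf_pos[OF fin, of g l] unfolding ent_def mgf_def mgf_deriv_def xlogx_def by simp
qed

lemma ln_mgf_div_tendsto_expectation:
  assumes fin: "finite (set_pmf \<mu>)"
  shows "((\<lambda>l. ln (mgf \<mu> g l) / l) \<longlongrightarrow> measure_pmf.expectation \<mu> g) (at_right 0)"
proof -
  have "((\<lambda>l. (ln (mgf \<mu> g l) - ln (mgf \<mu> g 0)) / (l - 0)) \<longlongrightarrow> mgf_deriv \<mu> g 0 / mgf \<mu> g 0) (at 0)"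
    using has_real_derivative_ln_mgf[OF fin] by (rule has_field_derivative_iff[THEN iffD1])
  hence "((\<lambda>l. ln (mgf \<mu> g l) / l) \<longlongrightarrow> measure_pmf.expectation \<mu> g) (at 0)"
    by (simp add: mgf_def mgf_deriv_def)
  thus ?thesis by (rule tendsto_mono[OF at_le, rotated]) simp
qed

lemma le_limit_at_right_of_deriv_nonpos:
  fixes k k' :: "real \<Rightarrow> real"
  assumes der: "\<And>x. 0 < x \<Longrightarrow> x \<le> l \<Longrightarrow> (k has_real_derivative k' x) (at x)"
    and nonpos: "\<And>x. 0 < x \<Longrightarrow> x \<le> l \<Longrightarrow> k' x \<le> 0"
    and lim: "(k \<longlongrightarrow> c) (at_right 0)" and l: "0 < l"
  shows "k l \<le> c"
proof (rule tendsto_lowerbound[OF lim])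
  have "eventually (\<lambda>e. e \<in> {0<..<l}) (at_right (0::real))" using l by (rule eventually_at_right_real)
  thus "eventually (\<lambda>e. k l \<le> k e) (at_right (0::real))"
  proof eventually_elim
    case (elim e)
    with der nonpos show ?case by (intro DERIV_nonpos_imp_nonincreasing[of e l k]) force+
  qed
qed simp

text \<open>Herbst's argument: \<open>l \<mapsto> ln (mgf g l) / l - \<phi> l\<close> is nonincreasing and tends to the mean
  at \<open>0\<close>.\<close>
lemma ln_mgf_le_of_ent_le:
  assumes fin: "finite (set_pmf \<mu>)"
    and ent: "\<And>l. 0 < l \<Longrightarrow> l \<le> L \<Longrightarrow> ent \<mu> (\<lambda>x. exp (l * g x)) \<le> \<phi> * l\<^sup>2 * mgf \<mu> g l"
    and l: "0 < l" "l \<le> L"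
  shows "ln (mgf \<mu> g l) \<le> l * measure_pmf.expectation \<mu> g + \<phi> * l\<^sup>2"
proof -
  define m where "m = measure_pmf.expectation \<mu> g"
  define k where "k s = ln (mgf \<mu> g s) / s - m - \<phi> * s" for s
  define k' where "k' s = (mgf_deriv \<mu> g s / mgf \<mu> g s * s - ln (mgf \<mu> g s) * 1) / (s * s) - 0 - \<phi> * 1"
    for s
  have "(k has_real_derivative k' s) (at s)" if "0 < s" for s
    unfolding k_def k'_def using that
    by (intro DERIV_diff DERIV_divide has_real_derivative_ln_mgf[OF fin] DERIV_ident DERIV_const
        DERIV_cmult) auto
  moreover have "k' s \<le> 0" if "0 < s" "s \<le> L" for s
  proof -
    have "s * mgf_deriv \<mu> g s - mgf \<mu> g s * ln (mgf \<mu> g s) \<le> \<phi> * s\<^sup>2 * mgf \<mu> g s"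
      using ent[OF that] ent_exp_eq_mgf[OF fin, of s g] by simp
    thus ?thesis
      unfolding k'_def using that mgf_pos[OF fin, of g s]
      by (simp add: field_simps power2_eq_square)
  qed
  moreover have "(k \<longlongrightarrow> m - m - \<phi> * 0) (at_right 0)"
    unfolding k_def m_def
    by (intro tendsto_diff ln_mgf_div_tendsto_expectation[OF fin] tendsto_const tendsto_mult tendsto_ident_at)
  ultimately have "k l \<le> 0" using le_limit_at_right_of_deriv_nonpos[of l k k'] l by simp
  thus ?thesis unfolding k_def m_def using l by (simp add: divide_le_eq power2_eq_square algebra_simps)
qed

text \<open>The Bernstein-type variant, with \<open>l \<mapsto> (1 - a l) ln (mgf g l) / l\<close>.\<close>
lemma ln_mgf_le_of_ent_le_mgf_deriv:
  assumes fin: "finite (set_pmf \<mu>)" and a: "0 < a"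
    and ent: "\<And>l. 0 < l \<Longrightarrow> l < 1 / a \<Longrightarrow> ent \<mu> (\<lambda>x. exp (l * g x)) \<le> a * l\<^sup>2 * mgf_deriv \<mu> g l"
    and l: "0 < l" "l < 1 / a"
  shows "ln (mgf \<mu> g l) \<le> l * measure_pmf.expectation \<mu> g / (1 - a * l)"
proof -
  define m where "m = measure_pmf.expectation \<mu> g"
  define k where "k s = ln (mgf \<mu> g s) / s * (1 - a * s)" for s
  define k' where "k' s = (mgf_deriv \<mu> g s / mgf \<mu> g s * s - ln (mgf \<mu> g s) * 1) / (s * s) * (1 - a * s)
    + (0 - a * 1) * (ln (mgf \<mu> g s) / s)" for s
  have "(k has_real_derivative k' s) (at s)" if "0 < s" for s
    unfolding k_def k'_def using that
    by (intro DERIV_mult DERIV_diff DERIV_divide has_real_derivative_ln_mgf[OF fin] DERIV_ident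
        DERIV_const DERIV_cmult) auto
  moreover have "k' s \<le> 0" if "0 < s" "s \<le> l" for s
  proof -
    have "s < 1 / a" using that l by simp
    hence "s * mgf_deriv \<mu> g s - mgf \<mu> g s * ln (mgf \<mu> g s) \<le> a * s\<^sup>2 * mgf_deriv \<mu> g s"
      using ent[OF that(1)] ent_exp_eq_mgf[OF fin, of s g] by simp
    hence "s * mgf_deriv \<mu> g s * (1 - a * s) - mgf \<mu> g s * ln (mgf \<mu> g s) \<le> 0"
      by (simp add: algebra_simps power2_eq_square)
    moreover have "k' s = (s * mgf_deriv \<mu> g s * (1 - a * s) - mgf \<mu> g s * ln (mgf \<mu> g s)) /
        (mgf \<mu> g s * s\<^sup>2)"
      unfolding k'_def using mgf_pos[OF fin, of g s] that(1) by (simp add: field_simps power2_eq_square)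
    ultimately show ?thesis using mgf_pos[OF fin, of g s] that(1) by (simp add: divide_nonpos_pos)
  qed
  moreover have "(k \<longlongrightarrow> m * (1 - a * 0)) (at_right 0)"
    unfolding k_def m_def
    by (intro tendsto_mult ln_mgf_div_tendsto_expectation[OF fin] tendsto_diff tendsto_const tendsto_ident_at)
  ultimately have "k l \<le> m" using le_limit_at_right_of_deriv_nonpos[of l k k'] l by simp
  moreover have "0 < 1 - a * l" using l a by (simp add: field_simps)
  ultimately show ?thesis unfolding k_def m_def using l by (simp add: le_divide_eq divide_le_eq mult.commute)
qed

section \<open>Entropy duality\<close>

lemma mult_le_xlnx_add_exp:
  fixes u v :: real
  assumes "0 < u"
  shows "u * v \<le> u * ln u - u + exp v"
proof -
  have "1 + (v - ln u) \<le> exp v / u"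
    using exp_ge_add_one_self[of "v - ln u"] assms by (simp add: exp_diff)
  thus ?thesis using assms by (simp add: field_simps)
qed

lemma ent_eq_of_pos:
  assumes fin: "finite (set_pmf \<mu>)" and pos: "\<And>x. 0 < h x"
  shows "ent \<mu> h = measure_pmf.expectation \<mu> (\<lambda>x. h x * ln (h x)) -
    measure_pmf.expectation \<mu> h * ln (measure_pmf.expectation \<mu> h)"
  using expectation_pos_finite_pmf[OF fin pos] pos unfolding ent_def xlogx_def
  by (simp add: less_imp_neq[symmetric])

text \<open>The variational form of the entropy, \<open>E[Y h] \<le> Ent h + E h * ln E[e\<^sup>Y]\<close>, obtained by
  integrating \<open>mult_le_xlnx_add_exp\<close> at \<open>u = h / E h\<close>, \<open>v = Y - ln E[e\<^sup>Y]\<close>.\<close>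
lemma expectation_mult_le_ent_add:
  fixes \<mu> :: "'a pmf" and h Y :: "'a \<Rightarrow> real"
  assumes fin: "finite (set_pmf \<mu>)" and pos: "\<And>x. 0 < h x"
  shows "measure_pmf.expectation \<mu> (\<lambda>x. Y x * h x) \<le>
    ent \<mu> h + measure_pmf.expectation \<mu> h * ln (measure_pmf.expectation \<mu> (\<lambda>x. exp (Y x)))"
proof -
  let ?E = "measure_pmf.expectation \<mu>"
  define Z where "Z = ?E h"
  define L where "L = ln (?E (\<lambda>x. exp (Y x)))"
  have Z: "0 < Z" unfolding Z_def using pos by (intro expectation_pos_finite_pmf[OF fin])
  have Q: "0 < ?E (\<lambda>x. exp (Y x))" by (intro expectation_pos_finite_pmf[OF fin]) simp
  have pw: "Y x * h x \<le> h x * ln (h x) - h x * ln Z - h x + Z * exp (Y x - L) + L * h x" for x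
  proof -
    have "h x * (Y x - L) = Z * ((h x / Z) * (Y x - L))" using Z by simp
    also have "\<dots> \<le> Z * ((h x / Z) * ln (h x / Z) - h x / Z + exp (Y x - L))"
      using Z pos[of x] by (intro mult_left_mono mult_le_xlnx_add_exp) auto
    also have "\<dots> = h x * ln (h x) - h x * ln Z - h x + Z * exp (Y x - L)"
      using Z pos[of x] by (simp add: ln_div field_simps)
    finally show ?thesis by (simp add: algebra_simps)
  qed
  have "?E (\<lambda>x. Y x * h x) \<le> ?E (\<lambda>x. h x * ln (h x) - h x * ln Z - h x + Z * exp (Y x - L) + L * h x)"
    by (rule expectation_mono_finite_pmf[OF fin pw])
  also have "\<dots> = ?E (\<lambda>x. h x * ln (h x)) - Z * ln Z - Z + Z * (?E (\<lambda>x. exp (Y x)) / exp L) + L * Z"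
    unfolding Z_def exp_diff
    by (simp add: expectation_finite_pmf[OF fin] algebra_simps sum.distrib sum_subtractf
        sum_distrib_left sum_distrib_right sum_divide_distrib)
  also have "\<dots> = ent \<mu> h + Z * L"
    using Q unfolding ent_eq_of_pos[OF fin pos] Z_def L_def by simp
  finally show ?thesis unfolding Z_def L_def .
qed

section \<open>From exponential moments to a second moment\<close>

text \<open>Optimising \<open>y\<^sup>2 \<le> 4 / s\<^sup>2 * exp (s * y)\<close> over \<open>s\<close> gives the constant \<open>4 e \<le> 12\<close>.\<close>
lemma pos_part_sq_le_exp:
  fixes s y :: real
  assumes "0 < s"
  shows "(max y 0)\<^sup>2 \<le> 4 / s\<^sup>2 * exp (s * y)"
proof (cases "y \<le> 0")
  case False
  have "s * y / 2 \<le> exp (s * y / 2)"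
    using exp_ge_add_one_self[of "s * y / 2"] by linarith
  hence "(s * y / 2)\<^sup>2 \<le> (exp (s * y / 2))\<^sup>2" using False assms by (intro power_mono) auto
  hence "(s * y)\<^sup>2 \<le> 4 * exp (s * y)"
    by (simp add: power_divide power2_eq_square exp_add[symmetric])
  thus ?thesis using False assms by (simp add: power_mult_distrib field_simps)
qed simp

lemma expectation_pos_part_sq_le_of_ln_mgf_le:
  assumes fin: "finite (set_pmf \<mu>)" and \<phi>: "0 < \<phi>"
    and mgf: "\<And>s. 0 < s \<Longrightarrow> ln (mgf \<mu> g s) \<le> s * m + \<phi> * s\<^sup>2"
  shows "measure_pmf.expectation \<mu> (\<lambda>x. (max (g x - m) 0)\<^sup>2) \<le> 12 * \<phi>"
proof -
  define s where "s = 1 / sqrt \<phi>"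
  have s: "0 < s" "s\<^sup>2 = 1 / \<phi>" unfolding s_def using \<phi> by (simp_all add: power_divide)
  have "measure_pmf.expectation \<mu> (\<lambda>x. (max (g x - m) 0)\<^sup>2) \<le>
      measure_pmf.expectation \<mu> (\<lambda>x. 4 / s\<^sup>2 * exp (- (s * m)) * exp (s * g x))"
    by (intro expectation_mono_finite_pmf fin order_trans[OF pos_part_sq_le_exp[OF s(1)]])
      (simp add: right_diff_distrib exp_diff exp_minus field_simps)
  also have "\<dots> = 4 / s\<^sup>2 * exp (- (s * m)) * exp (ln (mgf \<mu> g s))"
    using mgf_pos[OF fin] by (simp add: mgf_def)
  also have "\<dots> \<le> 4 / s\<^sup>2 * exp (- (s * m)) * exp (s * m + \<phi> * s\<^sup>2)"
    using mgf[OF s(1)] s(1) by (intro mult_left_mono) auto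
  also have "\<dots> = 4 * \<phi> * exp 1"
    using s \<phi> by (simp flip: exp_add)
  also have "\<dots> \<le> 4 * \<phi> * 3" using \<phi> exp_le by (intro mult_left_mono) auto
  finally show ?thesis by simp
qed

lemma sq_le_two_sq_add_two_pos_part_sq:
  fixes y m :: real
  assumes "0 \<le> y" "0 \<le> m"
  shows "y\<^sup>2 \<le> 2 * m\<^sup>2 + 2 * (max (y - m) 0)\<^sup>2"
proof (cases "y \<le> m")
  case True
  hence "y\<^sup>2 \<le> m\<^sup>2" using assms by (intro power_mono) auto
  moreover have "(max (y - m) 0)\<^sup>2 = 0" using True by simp
  ultimately show ?thesis using zero_le_power2[of m] by linarith
next
  case False
  thus ?thesis using sum_squares_bound[of m "y - m"] by (simp add: power2_eq_square algebra_simps)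
qed

section \<open>The Chernoff bound\<close>

lemma prob_deviation_le_mgf:
  assumes fin: "finite (set_pmf \<mu>)" and l: "0 < l"
  shows "measure_pmf.prob \<mu> {x. t \<le> F x - measure_pmf.expectation \<mu> F} \<le>
    exp (- l * (t + measure_pmf.expectation \<mu> F)) * mgf \<mu> F l"
proof -
  have int: "integrable (measure_pmf \<mu>) (\<lambda>x. exp (l * F x))"
    by (rule integrable_measure_pmf_finite[OF fin])
  have "measure_pmf.prob \<mu> {x \<in> space (measure_pmf \<mu>). t + measure_pmf.expectation \<mu> F \<le> F x} \<le>
      exp (- l * (t + measure_pmf.expectation \<mu> F)) *
      (\<integral>x \<in> space (measure_pmf \<mu>). exp (l * F x) \<partial>measure_pmf \<mu>)"
    using int by (intro measure_pmf.Chernoff_ineq_ge l) (auto simp: set_integrable_def)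
  thus ?thesis using set_integral_space[OF int] by (simp add: mgf_def add.commute le_diff_eq)
qed

lemma exp_half_less_two: "exp (1 / 2 :: real) < 2"
proof -
  have "(exp (1 / 2 :: real))\<^sup>2 = exp 1" by (simp add: power2_eq_square flip: exp_add)
  also have "\<dots> < 2\<^sup>2" using exp_le by simp
  finally show ?thesis by (rule power_less_imp_less_base) simp
qed

lemma chernoff_exponent_le_optimum:
  fixes A B c t E :: real
  assumes pos: "0 < c" "0 < A" "0 < B" "0 < t"
    and E1: "E \<le> t\<^sup>2 / (60 * c * A\<^sup>2)" and E2: "E \<le> t / (60 * c * B)" and E: "1 / 2 < E"
  shows "E \<le> t\<^sup>2 / (4 * (4 * c * A\<^sup>2 + 24 * c\<^sup>2 * B\<^sup>2))"
proof -
  define C where "C = 4 * c * A\<^sup>2 + 24 * c\<^sup>2 * B\<^sup>2"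
  have C: "0 < C" unfolding C_def using pos by (simp add: add_pos_pos)
  have "E \<le> t\<^sup>2 / (4 * C)"
  proof (cases "6 * c * B\<^sup>2 \<le> A\<^sup>2")
    case True
    hence "C \<le> 8 * c * A\<^sup>2"
      using pos mult_left_mono[OF True, of "4 * c"] unfolding C_def by (simp add: power2_eq_square)
    hence "t\<^sup>2 / (60 * c * A\<^sup>2) \<le> t\<^sup>2 / (4 * C)"
      using pos C by (intro divide_left_mono) auto
    thus ?thesis using E1 by linarith
  next
    case False
    hence C_le: "C \<le> 48 * c\<^sup>2 * B\<^sup>2"
      using pos mult_left_mono[of "A\<^sup>2" "6 * c * B\<^sup>2" "4 * c"] unfolding C_def by (simp add: power2_eq_square)
    have "1 / 2 < t / (60 * c * B)" using E E2 by linarith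
    hence "30 * c * B < t" using pos by (simp add: field_simps)
    have "t / (60 * c * B) = t * (4 * c * B) / (240 * c\<^sup>2 * B\<^sup>2)"
      using pos by (simp add: field_simps power2_eq_square)
    also have "\<dots> \<le> t * t / (240 * c\<^sup>2 * B\<^sup>2)"
      using \<open>30 * c * B < t\<close> pos by (intro divide_right_mono mult_left_mono) auto
    also have "\<dots> \<le> t\<^sup>2 / (4 * (48 * c\<^sup>2 * B\<^sup>2))"
      unfolding power2_eq_square[of t] by (rule divide_left_mono) (use pos in auto)
    also have "\<dots> \<le> t\<^sup>2 / (4 * C)"
      using C_le pos C by (intro divide_left_mono) (auto simp: mult_ac)
    finally show ?thesis using E2 by linarith
  qed
  thus ?thesis unfolding C_def .
qed

text \<open>Choosing the exponent in the Chernoff bound: \<open>l = t / (2 C)\<close> if this is admissible, and the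
  largest admissible value \<open>1 / (2 c B)\<close> otherwise. As \<open>x / 0 = 0\<close>, the hypothesis forces
  \<open>c\<close>, \<open>A\<close>, \<open>B\<close> and \<open>t\<close> to be positive.\<close>
lemma exists_exponent_for_tail:
  fixes A B c t :: real
  assumes "0 \<le> A" "0 \<le> B" "0 \<le> c" "0 \<le> t"
    and gt: "1 / 2 < 1 / (60 * c) * min (t\<^sup>2 / A\<^sup>2) (t / B)"
  obtains l where "0 < c" "0 < B" "0 < l" "l \<le> 1 / (2 * c * B)"
    "- l * t + (4 * c * A\<^sup>2 + 24 * c\<^sup>2 * B\<^sup>2) * l\<^sup>2 \<le> - (1 / (60 * c) * min (t\<^sup>2 / A\<^sup>2) (t / B))"
proof -
  define E where "E = 1 / (60 * c) * min (t\<^sup>2 / A\<^sup>2) (t / B)"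
  define C where "C = 4 * c * A\<^sup>2 + 24 * c\<^sup>2 * B\<^sup>2"
  have "0 < 1 / (60 * c) * min (t\<^sup>2 / A\<^sup>2) (t / B)" using gt by linarith
  hence "0 < c" "0 < t\<^sup>2 / A\<^sup>2" "0 < t / B" using assms(3) by (auto simp: zero_less_divide_iff)
  hence pos: "0 < c" "0 < A" "0 < B" "0 < t"
    using assms(1,2,4) by (auto simp: zero_less_divide_iff)
  have E1: "E \<le> t\<^sup>2 / (60 * c * A\<^sup>2)" and E2: "E \<le> t / (60 * c * B)"
    unfolding E_def using pos by (auto simp: min_def field_simps)
  have C: "0 < C" unfolding C_def using pos by (simp add: add_pos_pos)
  show ?thesis
  proof (cases "t / (2 * C) \<le> 1 / (2 * c * B)")
    case True
    have "E \<le> t\<^sup>2 / (4 * C)"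
      unfolding C_def using pos E1 E2 gt unfolding E_def[symmetric] by (rule chernoff_exponent_le_optimum)
    moreover have "- (t / (2 * C)) * t + C * (t / (2 * C))\<^sup>2 = - (t\<^sup>2 / (4 * C))"
      using C by (simp add: field_simps power2_eq_square)
    ultimately show ?thesis
      using that[of "t / (2 * C)"] True pos C unfolding E_def C_def by simp
  next
    case False
    define l where "l = 1 / (2 * c * B)"
    have "- l * t + C * l\<^sup>2 = l * (C * l - t)" by (simp add: power2_eq_square algebra_simps)
    also have "\<dots> \<le> l * (- t / 2)"
      using False pos C unfolding l_def by (intro mult_left_mono) (auto simp: field_simps)
    also have "\<dots> \<le> - (t / (60 * c * B))" using pos unfolding l_def by (simp add: field_simps)
    finally show ?thesis using that[of l] E2 pos unfolding l_def E_def C_def by simp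
  qed
qed

section \<open>The coefficient matrices of a Banach-valued chaos\<close>

definition chaos :: "('n::{finite,linorder} \<Rightarrow> 'n \<Rightarrow> 'b::real_normed_vector) \<Rightarrow> (real, 'n) vec \<Rightarrow> 'b" where
  "chaos t x = (\<Sum>(i, j)\<in>{(i, j). i < j}. (x $ i * x $ j) *\<^sub>R t i j)"

definition dual_matrix ::
  "('n::{finite,linorder} \<Rightarrow> 'n \<Rightarrow> 'b::real_normed_vector) \<Rightarrow> ('b \<Rightarrow>\<^sub>L real) \<Rightarrow> ((real, 'n) vec, 'n) vec" where
  "dual_matrix t v = (\<chi> i j. v (ext_fam t i j))"

text \<open>The function \<open>W\<close> of the paper: its mean is \<open>T1\<close>, and it controls the gradient of \<open>fT\<close>.\<close>
definition chaos_grad_sup ::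
  "('n::{finite,linorder} \<Rightarrow> 'n \<Rightarrow> 'b::real_normed_vector) set \<Rightarrow> (real, 'n) vec \<Rightarrow> real" where
  "chaos_grad_sup \<T> x = (SUP t\<in>\<T>. SUP v\<in>dual_ball. norm (dual_matrix t v *v x))"

lemma fT_eq_SUP_chaos: "fT \<T> x = (SUP t\<in>\<T>. norm (chaos t x))"
  unfolding fT_def chaos_def ..

lemma T2_eq_SUP_onorm: "T2 \<T> = (SUP t\<in>\<T>. SUP v\<in>dual_ball. onorm ((*v) (dual_matrix t v)))"
  unfolding T2_def dual_matrix_def by simp

lemma norm_dual_matrix_mult:
  "norm (dual_matrix t v *v x) = sqrt (\<Sum>i\<in>UNIV. (\<Sum>j\<in>UNIV. x $ j * v (ext_fam t i j))\<^sup>2)"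
  unfolding norm_vec_def L2_set_def dual_matrix_def matrix_vector_mult_def by (simp add: mult.commute)

lemma T1_eq_expectation_chaos_grad_sup: "T1 \<mu> \<T> = measure_pmf.expectation \<mu> (chaos_grad_sup \<T>)"
  unfolding T1_def chaos_grad_sup_def norm_dual_matrix_mult ..

lemma dual_matrix_sym: "dual_matrix t v $ i $ j = dual_matrix t v $ j $ i"
  unfolding dual_matrix_def ext_fam_def by (cases i j rule: linorder_cases) auto

lemma zero_in_dual_ball: "0 \<in> dual_ball"
  unfolding dual_ball_def by simp

lemma sum_pairs_less:
  fixes F :: "'n::{finite,linorder} \<Rightarrow> 'n \<Rightarrow> 'c::comm_monoid_add"
  shows "(\<Sum>(i, j)\<in>{(i, j). i < j}. F i j) = (\<Sum>i\<in>UNIV. \<Sum>j\<in>UNIV. if i < j then F i j else 0)"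
proof -
  have pairs: "{(i, j). i < j} = {p\<in>UNIV. fst p < snd p}" by auto
  have "(\<Sum>(i, j)\<in>{(i, j). i < j}. F i j) = (\<Sum>p\<in>{p\<in>UNIV. fst p < snd p}. F (fst p) (snd p))"
    unfolding pairs case_prod_beta ..
  also have "\<dots> = (\<Sum>p\<in>UNIV. if fst p < snd p then F (fst p) (snd p) else 0)"
    by (rule sum.inter_filter) simp
  also have "\<dots> = (\<Sum>i\<in>UNIV. \<Sum>j\<in>UNIV. if i < j then F i j else 0)"
    by (subst sum.cartesian_product) (simp add: case_prod_beta)
  finally show ?thesis .
qed

text \<open>Changing one coordinate changes the chaos linearly, because the diagonal \<open>t i i\<close> does not
  occur.\<close>
lemma chaos_diff_coord:
  fixes t :: "'n::{finite,linorder} \<Rightarrow> 'n \<Rightarrow> 'b::real_normed_vector"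
  assumes z: "\<And>j. j \<noteq> i \<Longrightarrow> z $ j = x $ j"
  shows "chaos t x - chaos t z = (x $ i - z $ i) *\<^sub>R (\<Sum>j\<in>UNIV. x $ j *\<^sub>R ext_fam t i j)"
proof -
  define c where "c = x $ i - z $ i"
  define A where "A l = (if i < l then (c * x $ l) *\<^sub>R t i l else 0)" for l
  define B where "B k = (if k < i then (c * x $ k) *\<^sub>R t k i else 0)" for k
  have pw: "(if k < l then (x $ k * x $ l) *\<^sub>R t k l - (z $ k * z $ l) *\<^sub>R t k l else 0)
      = (if k = i then A l else 0) + (if l = i then B k else 0)" for k l
    using z[of k] z[of l] unfolding A_def B_def c_def
    by (cases "k = i"; cases "l = i") (auto simp: algebra_simps simp flip: scaleR_diff_left)
  have "chaos t x - chaos t z =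
      (\<Sum>k\<in>UNIV. \<Sum>l\<in>UNIV. (if k = i then A l else 0) + (if l = i then B k else 0))"
    unfolding chaos_def sum_pairs_less sum_subtractf[symmetric] pw[symmetric]
    by (intro sum.cong refl) simp
  also have "\<dots> = (\<Sum>l\<in>UNIV. A l) + (\<Sum>k\<in>UNIV. B k)"
  proof -
    have "(\<Sum>l\<in>UNIV. if k = i then A l else 0) = (if k = i then sum A UNIV else 0)" for k
      by simp
    thus ?thesis by (simp add: sum.distrib sum.swap[of "\<lambda>k l. if l = i then B k else 0"])
  qed
  also have "\<dots> = c *\<^sub>R (\<Sum>j\<in>UNIV. x $ j *\<^sub>R ext_fam t i j)"
    unfolding A_def B_def ext_fam_def scaleR_sum_right sum.distrib[symmetric]
    by (intro sum.cong) auto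
  finally show ?thesis unfolding c_def .
qed

lemma inner_mult_diff_coord:
  fixes A :: "((real, 'n::finite) vec, 'n) vec"
  assumes sym: "\<And>k j. A $ k $ j = A $ j $ k" and z: "\<And>j. j \<noteq> i \<Longrightarrow> z $ j = x $ j"
  shows "inner u (A *v x - A *v z) = (x $ i - z $ i) * (A *v u) $ i"
proof -
  have "(A *v x - A *v z) $ k = (\<Sum>j\<in>UNIV. A $ k $ j * (x $ j - z $ j))" for k
    unfolding matrix_vector_mult_def by (simp add: sum_subtractf right_diff_distrib)
  also have "\<dots> k = A $ k $ i * (x $ i - z $ i)" for k
    using z by (subst sum.remove[of _ i]) (auto intro!: sum.neutral)
  finally have "inner u (A *v x - A *v z) = (\<Sum>k\<in>UNIV. u $ k * (A $ k $ i * (x $ i - z $ i)))"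
    unfolding inner_vec_def by simp
  thus ?thesis by (simp add: matrix_vector_mult_def sum_distrib_left sym mult_ac)
qed

lemma norm_sq_vec: "(norm x)\<^sup>2 = (\<Sum>i\<in>UNIV. (x $ i)\<^sup>2)"
  unfolding power2_norm_eq_inner inner_vec_def by (simp add: power2_eq_square)

text \<open>Testing against \<open>sgn (A x)\<close> linearises the norm at \<open>x\<close>.\<close>
lemma norm_mult_diff_coord_le:
  fixes A :: "((real, 'n::finite) vec, 'n) vec"
  assumes sym: "\<And>k j. A $ k $ j = A $ j $ k" and z: "\<And>j. j \<noteq> i \<Longrightarrow> z $ j = x $ j"
  shows "norm (A *v x) - norm (A *v z) \<le> (x $ i - z $ i) * (A *v sgn (A *v x)) $ i"
proof -
  let ?u = "sgn (A *v x)"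
  have "inner ?u (A *v z) \<le> norm ?u * norm (A *v z)" by (rule norm_cauchy_schwarz)
  also have "\<dots> \<le> norm (A *v z)" by (simp add: norm_sgn)
  moreover have "inner ?u (A *v x) = norm (A *v x)"
    by (cases "A *v x = 0") (simp_all add: sgn_div_norm power2_norm_eq_inner[symmetric] power2_eq_square)
  ultimately have "norm (A *v x) - norm (A *v z) \<le> inner ?u (A *v x - A *v z)"
    by (simp add: inner_diff_right)
  also have "\<dots> = (x $ i - z $ i) * (A *v ?u) $ i" by (rule inner_mult_diff_coord[OF sym z])
  finally show ?thesis .
qed

lemma norm_chaos_diff_coord_le:
  fixes v :: "'b::real_normed_vector \<Rightarrow>\<^sub>L real"
  assumes v: "norm v \<le> 1" "v (chaos t x) = norm (chaos t x)" and z: "\<And>j. j \<noteq> i \<Longrightarrow> z $ j = x $ j"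
  shows "norm (chaos t x) - norm (chaos t z) \<le> (x $ i - z $ i) * (dual_matrix t v *v x) $ i"
proof -
  have "v (chaos t z) \<le> norm v * norm (chaos t z)"
    using norm_blinfun[of v "chaos t z"] by simp
  also have "\<dots> \<le> norm (chaos t z)"
    using mult_right_mono[OF v(1) norm_ge_zero[of "chaos t z"]] by simp
  finally have "norm (chaos t x) - norm (chaos t z) \<le> v (chaos t x - chaos t z)"
    using v(2) by (simp add: blinfun.diff_right)
  also have "\<dots> = (x $ i - z $ i) * (dual_matrix t v *v x) $ i"
    using chaos_diff_coord[OF z, where t = t] unfolding dual_matrix_def matrix_vector_mult_def
    by (simp add: blinfun.scaleR_right blinfun.sum_right mult.commute)
  finally show ?thesis .
qed

lemma le_SUP_SUP:
  fixes F :: "'a \<Rightarrow> 'c \<Rightarrow> real"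
  assumes bound: "\<And>t v. t \<in> A \<Longrightarrow> v \<in> B \<Longrightarrow> F t v \<le> K" and t: "t \<in> A" and v: "v \<in> B"
  shows "F t v \<le> (SUP t\<in>A. SUP v\<in>B. F t v)"
proof -
  have inner: "bdd_above ((\<lambda>v. F t v) ` B)" using bound t by (intro bdd_aboveI[of _ K]) auto
  have "(SUP v\<in>B. F t v) \<le> K" if "t \<in> A" for t
    using bound that v by (intro cSUP_least) auto
  hence outer: "bdd_above ((\<lambda>t. SUP v\<in>B. F t v) ` A)" by (intro bdd_aboveI[of _ K]) auto
  show ?thesis by (rule order_trans[OF cSUP_upper[OF v inner] cSUP_upper[OF t outer]])
qed

lemma SUP_SUP_approx:
  fixes F :: "'a \<Rightarrow> 'c \<Rightarrow> real"
  assumes bound: "\<And>t v. t \<in> A \<Longrightarrow> v \<in> B \<Longrightarrow> F t v \<le> K" and "A \<noteq> {}" "B \<noteq> {}" "0 < e"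
  obtains t v where "t \<in> A" "v \<in> B" "(SUP t\<in>A. SUP v\<in>B. F t v) - e < F t v"
proof -
  have bdd_B: "bdd_above ((\<lambda>v. F t v) ` B)" if "t \<in> A" for t
    using bound that by (intro bdd_aboveI[of _ K]) auto
  have "bdd_above ((\<lambda>t. SUP v\<in>B. F t v) ` A)"
    using bound \<open>B \<noteq> {}\<close> by (auto intro!: bdd_aboveI[of _ K] cSUP_least)
  moreover have "(SUP t\<in>A. SUP v\<in>B. F t v) - e < (SUP t\<in>A. SUP v\<in>B. F t v)" using \<open>0 < e\<close> by simp
  ultimately obtain t where t: "t \<in> A" "(SUP t\<in>A. SUP v\<in>B. F t v) - e < (SUP v\<in>B. F t v)"
    using less_cSUP_iff[OF \<open>A \<noteq> {}\<close>] by blast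
  then obtain v where "v \<in> B" "(SUP t\<in>A. SUP v\<in>B. F t v) - e < F t v"
    using less_cSUP_iff[OF \<open>B \<noteq> {}\<close> bdd_B[OF t(1)]] by blast
  with t(1) show ?thesis using that by blast
qed

text \<open>The bound \<open>M\<close> only makes the suprema in \<open>fT\<close>, \<open>T2\<close> and \<open>chaos_grad_sup\<close> genuine
  suprema: \<open>Sup\<close> of a set of reals that is not bounded above is unspecified.\<close>
locale bounded_family =
  fixes \<T> :: "('n::{finite,linorder} \<Rightarrow> 'n \<Rightarrow> 'b::real_normed_vector) set" and M :: real
  assumes nonempty: "\<T> \<noteq> {}"
    and bounded: "\<And>t i j. t \<in> \<T> \<Longrightarrow> norm (t i j) \<le> M"
begin

lemma M_nonneg: "0 \<le> M"
  using nonempty bounded order_trans[OF norm_ge_zero] by blast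

lemma abs_dual_matrix_le:
  assumes "t \<in> \<T>" "v \<in> dual_ball"
  shows "\<bar>dual_matrix t v $ i $ j\<bar> \<le> M"
proof -
  have "norm (ext_fam t i j) \<le> M"
    using bounded[OF assms(1)] M_nonneg unfolding ext_fam_def by auto
  hence "norm v * norm (ext_fam t i j) \<le> 1 * M"
    using assms(2) unfolding dual_ball_def by (intro mult_mono) auto
  thus ?thesis using norm_blinfun[of v "ext_fam t i j"] by (simp add: dual_matrix_def)
qed

lemma onorm_dual_matrix_le:
  assumes "t \<in> \<T>" "v \<in> dual_ball"
  shows "onorm ((*v) (dual_matrix t v)) \<le> real CARD('n) * real CARD('n) * M"
proof -
  have "onorm ((*v) (dual_matrix t v)) \<le> (\<Sum>i\<in>UNIV. \<Sum>j\<in>UNIV. \<bar>dual_matrix t v $ i $ j\<bar>)"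
    by (rule onorm_le_matrix_component_sum)
  also have "\<dots> \<le> (\<Sum>i\<in>(UNIV::'n set). \<Sum>j\<in>(UNIV::'n set). M)"
    using abs_dual_matrix_le[OF assms] by (intro sum_mono) auto
  finally show ?thesis by simp
qed

lemma norm_dual_matrix_mult_le:
  assumes "t \<in> \<T>" "v \<in> dual_ball"
  shows "norm (dual_matrix t v *v x) \<le> real CARD('n) * real CARD('n) * M * norm x"
  using onorm[OF matrix_vector_mul_bounded_linear, of "dual_matrix t v" x] onorm_dual_matrix_le[OF assms]
  by (meson mult_right_mono norm_ge_zero order_trans)

lemma norm_dual_matrix_mult_le_chaos_grad_sup:
  "t \<in> \<T> \<Longrightarrow> v \<in> dual_ball \<Longrightarrow> norm (dual_matrix t v *v x) \<le> chaos_grad_sup \<T> x"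
  unfolding chaos_grad_sup_def
  by (rule le_SUP_SUP[where F = "\<lambda>t v. norm (dual_matrix t v *v x)", OF norm_dual_matrix_mult_le])

lemma chaos_grad_sup_nonneg: "0 \<le> chaos_grad_sup \<T> x"
proof -
  obtain t where "t \<in> \<T>" using nonempty by blast
  thus ?thesis
    by (rule order_trans[OF norm_ge_zero norm_dual_matrix_mult_le_chaos_grad_sup[OF _ zero_in_dual_ball]])
qed

lemma chaos_grad_sup_approx:
  assumes "0 < e"
  obtains t v where "t \<in> \<T>" "v \<in> dual_ball" "chaos_grad_sup \<T> x - e < norm (dual_matrix t v *v x)"
  using SUP_SUP_approx[where F = "\<lambda>t v. norm (dual_matrix t v *v x)", OF norm_dual_matrix_mult_le
      nonempty _ assms] zero_in_dual_ball that
  unfolding chaos_grad_sup_def by blast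

lemma onorm_dual_matrix_le_T2:
  "t \<in> \<T> \<Longrightarrow> v \<in> dual_ball \<Longrightarrow> onorm ((*v) (dual_matrix t v)) \<le> T2 \<T>"
  unfolding T2_eq_SUP_onorm
  by (rule le_SUP_SUP[where F = "\<lambda>t v. onorm ((*v) (dual_matrix t v))", OF onorm_dual_matrix_le])

lemma T2_nonneg: "0 \<le> T2 \<T>"
proof -
  obtain t where "t \<in> \<T>" using nonempty by blast
  thus ?thesis
    by (rule order_trans[OF onorm_pos_le[OF matrix_vector_mul_bounded_linear]
          onorm_dual_matrix_le_T2[OF _ zero_in_dual_ball]])
qed

lemma norm_dual_matrix_mult_le_T2:
  "t \<in> \<T> \<Longrightarrow> v \<in> dual_ball \<Longrightarrow> norm (dual_matrix t v *v y) \<le> T2 \<T> * norm y"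
  using onorm[OF matrix_vector_mul_bounded_linear, of "dual_matrix t v" y] onorm_dual_matrix_le_T2
  by (meson mult_right_mono norm_ge_zero order_trans)

lemma bdd_above_norm_chaos: "bdd_above ((\<lambda>t. norm (chaos t x)) ` \<T>)"
proof (rule bdd_aboveI[of _ "\<Sum>(i, j)\<in>{(i, j::'n). i < j}. \<bar>x $ i * x $ j\<bar> * M"])
  fix y assume "y \<in> (\<lambda>t. norm (chaos t x)) ` \<T>"
  then obtain t where t: "t \<in> \<T>" "y = norm (chaos t x)" by blast
  have "norm (chaos t x) \<le> (\<Sum>(i, j)\<in>{(i, j::'n). i < j}. norm ((x $ i * x $ j) *\<^sub>R t i j))"
    unfolding chaos_def case_prod_beta by (rule norm_sum)
  also have "\<dots> \<le> (\<Sum>(i, j)\<in>{(i, j::'n). i < j}. \<bar>x $ i * x $ j\<bar> * M)"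
    unfolding case_prod_beta by (intro sum_mono) (use bounded[OF t(1)] in \<open>auto intro: mult_left_mono\<close>)
  finally show "y \<le> (\<Sum>(i, j)\<in>{(i, j::'n). i < j}. \<bar>x $ i * x $ j\<bar> * M)" using t(2) by simp
qed

lemma norm_chaos_le_fT: "t \<in> \<T> \<Longrightarrow> norm (chaos t x) \<le> fT \<T> x"
  unfolding fT_eq_SUP_chaos by (rule cSUP_upper[OF _ bdd_above_norm_chaos])

lemma fT_approx:
  assumes "0 < e"
  obtains t where "t \<in> \<T>" "fT \<T> x - e < norm (chaos t x)"
proof -
  have "fT \<T> x - e < (SUP t\<in>\<T>. norm (chaos t x))" using assms by (simp add: fT_eq_SUP_chaos)
  thus ?thesis using less_cSUP_iff[OF nonempty bdd_above_norm_chaos] that by blast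
qed

end

section \<open>Concentration of the chaos\<close>

locale chaos_concentration = bounded_family \<T> M
  for \<T> :: "('n::{finite,linorder} \<Rightarrow> 'n \<Rightarrow> 'b::real_normed_vector) set" and M +
  fixes \<mu> :: "(real, 'n) vec pmf" and a b \<sigma> :: real
  assumes finite_support: "finite (set_pmf \<mu>)"
    and coord_range: "\<And>x i. x \<in> set_pmf \<mu> \<Longrightarrow> x $ i \<in> {a..b}"
    and lsi: "d_LSI \<mu> \<sigma>"
begin

abbreviation \<kappa> :: real where "\<kappa> \<equiv> (b - a)\<^sup>2 * \<sigma>\<^sup>2"

lemma abs_coord_diff_le: "x \<in> set_pmf \<mu> \<Longrightarrow> z \<in> set_pmf \<mu> \<Longrightarrow> \<bar>x $ i - z $ i\<bar> \<le> b - a"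
  using coord_range[of x i] coord_range[of z i] by auto

lemma a_le_b: "a \<le> b"
proof -
  obtain x where "x \<in> set_pmf \<mu>" using set_pmf_not_empty[of \<mu>] by blast
  thus ?thesis using coord_range[of x undefined] by simp
qed

lemma coord_increment_le:
  assumes "x \<in> set_pmf \<mu>" "z \<in> set_pmf \<mu>"
  shows "(x $ i - z $ i) * c \<le> (b - a) * \<bar>c\<bar>"
proof -
  have "(x $ i - z $ i) * c \<le> \<bar>x $ i - z $ i\<bar> * \<bar>c\<bar>" by (simp add: abs_mult[symmetric])
  also have "\<dots> \<le> (b - a) * \<bar>c\<bar>" using abs_coord_diff_le[OF assms] by (intro mult_right_mono) auto
  finally show ?thesis .
qed

lemma pos_grad_sq_chaos_grad_sup_le:
  assumes x: "x \<in> set_pmf \<mu>"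
  shows "pos_grad_sq \<mu> (chaos_grad_sup \<T>) x \<le> (b - a)\<^sup>2 * (T2 \<T>)\<^sup>2"
proof (rule pos_grad_sq_le_of_increments[OF finite_support x])
  show "0 \<le> b - a" "0 \<le> T2 \<T>" using a_le_b T2_nonneg by simp_all
  fix e :: real assume "0 < e"
  then obtain t v where tv: "t \<in> \<T>" "v \<in> dual_ball"
    and approx: "chaos_grad_sup \<T> x - e < norm (dual_matrix t v *v x)"
    using chaos_grad_sup_approx by blast
  define A where "A = dual_matrix t v"
  define r where "r i = (A *v sgn (A *v x)) $ i" for i
  have Au: "norm (A *v sgn (A *v x)) \<le> T2 \<T>"
    using norm_dual_matrix_mult_le_T2[OF tv, of "sgn (A *v x)"] T2_nonneg unfolding A_def
    by (auto simp: norm_sgn split: if_splits)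
  show "\<exists>r. (\<Sum>i\<in>UNIV. (r i)\<^sup>2) \<le> (T2 \<T>)\<^sup>2 \<and> (\<forall>i. \<bar>r i\<bar> \<le> T2 \<T>) \<and> (\<forall>i z. z \<in> set_pmf \<mu> \<longrightarrow>
      z \<in> coord_fiber i x \<longrightarrow> chaos_grad_sup \<T> x - chaos_grad_sup \<T> z \<le> e + (b - a) * \<bar>r i\<bar>)"
  proof (intro exI[of _ r] conjI allI impI)
    show "(\<Sum>i\<in>UNIV. (r i)\<^sup>2) \<le> (T2 \<T>)\<^sup>2"
      unfolding r_def norm_sq_vec[symmetric] using Au by (intro power_mono) auto
    show "\<bar>r i\<bar> \<le> T2 \<T>" for i
      unfolding r_def using component_le_norm_cart Au by (rule order_trans)
    fix i z assume z: "z \<in> set_pmf \<mu>" "z \<in> coord_fiber i x"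
    have "chaos_grad_sup \<T> x - chaos_grad_sup \<T> z < e + (norm (A *v x) - norm (A *v z))"
      using approx norm_dual_matrix_mult_le_chaos_grad_sup[OF tv, of z] unfolding A_def by simp
    also have "norm (A *v x) - norm (A *v z) \<le> (x $ i - z $ i) * r i"
      using z(2) unfolding r_def A_def by (intro norm_mult_diff_coord_le dual_matrix_sym) auto
    also have "\<dots> \<le> (b - a) * \<bar>r i\<bar>" by (rule coord_increment_le[OF x z(1)])
    finally show "chaos_grad_sup \<T> x - chaos_grad_sup \<T> z \<le> e + (b - a) * \<bar>r i\<bar>" by simp
  qed
qed

lemma pos_grad_sq_fT_le:
  assumes x: "x \<in> set_pmf \<mu>"
  shows "pos_grad_sq \<mu> (fT \<T>) x \<le> (b - a)\<^sup>2 * (chaos_grad_sup \<T> x)\<^sup>2"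
proof (rule pos_grad_sq_le_of_increments[OF finite_support x])
  show "0 \<le> b - a" "0 \<le> real CARD('n) * real CARD('n) * M * norm x"
    using a_le_b M_nonneg by simp_all
  fix e :: real assume "0 < e"
  then obtain t where t: "t \<in> \<T>" and approx: "fT \<T> x - e < norm (chaos t x)"
    using fT_approx by blast
  obtain v :: "'b \<Rightarrow>\<^sub>L real" where v: "norm v \<le> 1" "v (chaos t x) = norm (chaos t x)"
    using exists_norming_functional by blast
  hence vd: "v \<in> dual_ball" unfolding dual_ball_def by simp
  define r where "r i = (dual_matrix t v *v x) $ i" for i
  show "\<exists>r. (\<Sum>i\<in>UNIV. (r i)\<^sup>2) \<le> (chaos_grad_sup \<T> x)\<^sup>2 \<and>
      (\<forall>i. \<bar>r i\<bar> \<le> real CARD('n) * real CARD('n) * M * norm x) \<and>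
      (\<forall>i z. z \<in> set_pmf \<mu> \<longrightarrow> z \<in> coord_fiber i x \<longrightarrow> fT \<T> x - fT \<T> z \<le> e + (b - a) * \<bar>r i\<bar>)"
  proof (intro exI[of _ r] conjI allI impI)
    show "(\<Sum>i\<in>UNIV. (r i)\<^sup>2) \<le> (chaos_grad_sup \<T> x)\<^sup>2"
      unfolding r_def norm_sq_vec[symmetric] using norm_dual_matrix_mult_le_chaos_grad_sup[OF t vd]
      by (intro power_mono) auto
    show "\<bar>r i\<bar> \<le> real CARD('n) * real CARD('n) * M * norm x" for i
      unfolding r_def using component_le_norm_cart norm_dual_matrix_mult_le[OF t vd] by (rule order_trans)
    fix i z assume z: "z \<in> set_pmf \<mu>" "z \<in> coord_fiber i x"
    have "fT \<T> x - fT \<T> z < e + (norm (chaos t x) - norm (chaos t z))"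
      using approx norm_chaos_le_fT[OF t, of z] by simp
    also have "norm (chaos t x) - norm (chaos t z) \<le> (x $ i - z $ i) * r i"
      using z(2) unfolding r_def by (intro norm_chaos_diff_coord_le v) auto
    also have "\<dots> \<le> (b - a) * \<bar>r i\<bar>" by (rule coord_increment_le[OF x z(1)])
    finally show "fT \<T> x - fT \<T> z \<le> e + (b - a) * \<bar>r i\<bar>" by simp
  qed
qed

lemma ln_mgf_chaos_grad_sup_le:
  assumes s: "0 < s"
  shows "ln (mgf \<mu> (chaos_grad_sup \<T>) s) \<le> s * T1 \<mu> \<T> + \<kappa> * (T2 \<T>)\<^sup>2 / 2 * s\<^sup>2"
  unfolding T1_eq_expectation_chaos_grad_sup
proof (rule ln_mgf_le_of_ent_le[OF finite_support _ s order_refl])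
  fix l :: real assume "0 < l" "l \<le> s"
  hence "ent \<mu> (\<lambda>x. exp (l * chaos_grad_sup \<T> x)) \<le> \<sigma>\<^sup>2 * l\<^sup>2 / 2 *
      measure_pmf.expectation \<mu> (\<lambda>x. exp (l * chaos_grad_sup \<T> x) * ((b - a)\<^sup>2 * (T2 \<T>)\<^sup>2))"
    by (intro ent_exp_le_of_pos_grad_sq_le finite_support lsi pos_grad_sq_chaos_grad_sup_le) auto
  thus "ent \<mu> (\<lambda>x. exp (l * chaos_grad_sup \<T> x)) \<le> \<kappa> * (T2 \<T>)\<^sup>2 / 2 * l\<^sup>2 * mgf \<mu> (chaos_grad_sup \<T>) l"
    by (simp add: mgf_def algebra_simps)
qed

lemma T1_nonneg: "0 \<le> T1 \<mu> \<T>"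
  unfolding T1_eq_expectation_chaos_grad_sup by (intro expectation_nonneg_set_pmf chaos_grad_sup_nonneg)

lemma expectation_chaos_grad_sup_sq_le:
  assumes pos: "0 < \<kappa> * (T2 \<T>)\<^sup>2"
  shows "measure_pmf.expectation \<mu> (\<lambda>x. (chaos_grad_sup \<T> x)\<^sup>2) \<le> 2 * (T1 \<mu> \<T>)\<^sup>2 + 12 * (\<kappa> * (T2 \<T>)\<^sup>2)"
proof -
  have "measure_pmf.expectation \<mu> (\<lambda>x. (chaos_grad_sup \<T> x)\<^sup>2) \<le> measure_pmf.expectation \<mu>
      (\<lambda>x. 2 * (T1 \<mu> \<T>)\<^sup>2 + 2 * (max (chaos_grad_sup \<T> x - T1 \<mu> \<T>) 0)\<^sup>2)"
    by (intro expectation_mono_finite_pmf finite_support sq_le_two_sq_add_two_pos_part_sq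
        chaos_grad_sup_nonneg T1_nonneg)
  also have "\<dots> = 2 * (T1 \<mu> \<T>)\<^sup>2 +
      2 * measure_pmf.expectation \<mu> (\<lambda>x. (max (chaos_grad_sup \<T> x - T1 \<mu> \<T>) 0)\<^sup>2)"
    by (simp add: expectation_add_finite_pmf[OF finite_support])
  also have "measure_pmf.expectation \<mu> (\<lambda>x. (max (chaos_grad_sup \<T> x - T1 \<mu> \<T>) 0)\<^sup>2) \<le>
      12 * (\<kappa> * (T2 \<T>)\<^sup>2 / 2)"
    using pos by (intro expectation_pos_part_sq_le_of_ln_mgf_le[OF finite_support] ln_mgf_chaos_grad_sup_le) auto
  finally show ?thesis by (simp add: mult_ac)
qed

lemma ln_mgf_chaos_grad_sup_sq_le:
  assumes pos: "0 < \<kappa> * (T2 \<T>)\<^sup>2" and \<theta>: "0 < \<theta>" "\<theta> < 1 / (2 * (\<kappa> * (T2 \<T>)\<^sup>2))"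
  shows "ln (mgf \<mu> (\<lambda>y. (chaos_grad_sup \<T> y)\<^sup>2) \<theta>) \<le>
    \<theta> * measure_pmf.expectation \<mu> (\<lambda>y. (chaos_grad_sup \<T> y)\<^sup>2) / (1 - 2 * (\<kappa> * (T2 \<T>)\<^sup>2) * \<theta>)"
proof (rule ln_mgf_le_of_ent_le_mgf_deriv[OF finite_support _ _ \<theta>])
  show "0 < 2 * (\<kappa> * (T2 \<T>)\<^sup>2)" using pos by simp
  fix l :: real assume "0 < l"
  have "pos_grad_sq \<mu> (\<lambda>y. (chaos_grad_sup \<T> y)\<^sup>2) x \<le>
      4 * ((b - a)\<^sup>2 * (T2 \<T>)\<^sup>2) * (chaos_grad_sup \<T> x)\<^sup>2" if "x \<in> set_pmf \<mu>" for x
    using pos_grad_sq_sq_le[where g = "chaos_grad_sup \<T>", OF finite_support that chaos_grad_sup_nonneg]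
      mult_left_mono[OF pos_grad_sq_chaos_grad_sup_le[OF that], of "4 * (chaos_grad_sup \<T> x)\<^sup>2"]
    by (simp add: mult_ac)
  hence "ent \<mu> (\<lambda>x. exp (l * (chaos_grad_sup \<T> x)\<^sup>2)) \<le> \<sigma>\<^sup>2 * l\<^sup>2 / 2 * measure_pmf.expectation \<mu>
      (\<lambda>x. exp (l * (chaos_grad_sup \<T> x)\<^sup>2) * (4 * ((b - a)\<^sup>2 * (T2 \<T>)\<^sup>2) * (chaos_grad_sup \<T> x)\<^sup>2))"
    using \<open>0 < l\<close> by (intro ent_exp_le_of_pos_grad_sq_le finite_support lsi) auto
  thus "ent \<mu> (\<lambda>x. exp (l * (chaos_grad_sup \<T> x)\<^sup>2)) \<le>
      2 * (\<kappa> * (T2 \<T>)\<^sup>2) * l\<^sup>2 * mgf_deriv \<mu> (\<lambda>y. (chaos_grad_sup \<T> y)\<^sup>2) l"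
    by (simp add: mgf_deriv_def algebra_simps)
qed

text \<open>The gradient bound for \<open>fT\<close> involves \<open>chaos_grad_sup\<close>; entropy duality with
  \<open>Y = \<kappa> l\<^sup>2 chaos_grad_sup\<^sup>2\<close> trades it for an exponential moment of \<open>chaos_grad_sup\<^sup>2\<close>.\<close>
lemma ent_exp_fT_le:
  assumes l: "0 \<le> l"
  shows "ent \<mu> (\<lambda>x. exp (l * fT \<T> x)) \<le>
    mgf \<mu> (fT \<T>) l * ln (mgf \<mu> (\<lambda>y. (chaos_grad_sup \<T> y)\<^sup>2) (\<kappa> * l\<^sup>2))"
proof -
  let ?h = "\<lambda>x. exp (l * fT \<T> x)"
  let ?Q = "measure_pmf.expectation \<mu> (\<lambda>x. (\<kappa> * l\<^sup>2 * (chaos_grad_sup \<T> x)\<^sup>2) * ?h x)"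
  have "ent \<mu> ?h \<le> \<sigma>\<^sup>2 * l\<^sup>2 / 2 * measure_pmf.expectation \<mu> (\<lambda>x. ?h x * ((b - a)\<^sup>2 * (chaos_grad_sup \<T> x)\<^sup>2))"
    by (intro ent_exp_le_of_pos_grad_sq_le finite_support lsi l pos_grad_sq_fT_le)
  hence "ent \<mu> ?h \<le> ?Q / 2" by (simp add: algebra_simps)
  moreover have "?Q \<le> ent \<mu> ?h + mgf \<mu> (fT \<T>) l * ln (mgf \<mu> (\<lambda>y. (chaos_grad_sup \<T> y)\<^sup>2) (\<kappa> * l\<^sup>2))"
    using expectation_mult_le_ent_add[OF finite_support, of ?h "\<lambda>x. \<kappa> * l\<^sup>2 * (chaos_grad_sup \<T> x)\<^sup>2"]
    by (simp add: mgf_def mult_ac)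
  ultimately show ?thesis by simp
qed

lemma ln_mgf_fT_le:
  assumes pos: "0 < \<kappa>" "0 < T2 \<T>" and l: "0 < l" "l \<le> 1 / (2 * \<kappa> * T2 \<T>)"
  shows "ln (mgf \<mu> (fT \<T>) l) \<le> l * measure_pmf.expectation \<mu> (fT \<T>) +
    (4 * \<kappa> * (T1 \<mu> \<T>)\<^sup>2 + 24 * \<kappa>\<^sup>2 * (T2 \<T>)\<^sup>2) * l\<^sup>2"
proof (rule ln_mgf_le_of_ent_le[OF finite_support _ l])
  fix s :: real assume s: "0 < s" "s \<le> 1 / (2 * \<kappa> * T2 \<T>)"
  define \<theta> where "\<theta> = \<kappa> * s\<^sup>2"
  define K where "K = \<kappa> * (T2 \<T>)\<^sup>2"
  have \<theta>: "0 < \<theta>" and K: "0 < K" unfolding \<theta>_def K_def using pos s by simp_all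
  have "\<kappa> * T2 \<T> * s \<le> 1 / 2"
    using s pos by (simp add: field_simps)
  hence "(\<kappa> * T2 \<T> * s)\<^sup>2 \<le> 1 / 4"
    using pos s power_mono[of "\<kappa> * T2 \<T> * s" "1 / 2" 2] by (simp add: power_divide)
  moreover have "2 * K * \<theta> = 2 * (\<kappa> * T2 \<T> * s)\<^sup>2"
    unfolding \<theta>_def K_def by (simp only: power2_eq_square mult_ac)
  ultimately have small: "2 * K * \<theta> \<le> 1 / 2" by linarith
  hence "\<theta> < 1 / (2 * K)" using K by (simp add: field_simps)
  hence "ln (mgf \<mu> (\<lambda>y. (chaos_grad_sup \<T> y)\<^sup>2) \<theta>) \<le>
      \<theta> * measure_pmf.expectation \<mu> (\<lambda>y. (chaos_grad_sup \<T> y)\<^sup>2) / (1 - 2 * K * \<theta>)"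
    using ln_mgf_chaos_grad_sup_sq_le[folded K_def] K \<theta> by simp
  also have "\<dots> \<le> \<theta> * measure_pmf.expectation \<mu> (\<lambda>y. (chaos_grad_sup \<T> y)\<^sup>2) / (1 / 2)"
    using small \<theta> by (intro divide_left_mono mult_nonneg_nonneg expectation_nonneg_set_pmf) auto
  also have "\<dots> = 2 * (\<theta> * measure_pmf.expectation \<mu> (\<lambda>y. (chaos_grad_sup \<T> y)\<^sup>2))" by simp
  also have "\<dots> \<le> 2 * (\<theta> * (2 * (T1 \<mu> \<T>)\<^sup>2 + 12 * K))"
    using expectation_chaos_grad_sup_sq_le[folded K_def] K \<theta> by (intro mult_left_mono) auto
  also have "\<dots> = (4 * \<kappa> * (T1 \<mu> \<T>)\<^sup>2 + 24 * \<kappa>\<^sup>2 * (T2 \<T>)\<^sup>2) * s\<^sup>2"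
    unfolding \<theta>_def K_def by (simp add: power2_eq_square algebra_simps)
  finally have "mgf \<mu> (fT \<T>) s * ln (mgf \<mu> (\<lambda>y. (chaos_grad_sup \<T> y)\<^sup>2) \<theta>) \<le>
      mgf \<mu> (fT \<T>) s * ((4 * \<kappa> * (T1 \<mu> \<T>)\<^sup>2 + 24 * \<kappa>\<^sup>2 * (T2 \<T>)\<^sup>2) * s\<^sup>2)"
    using mgf_pos[OF finite_support] by (intro mult_left_mono) (auto intro: less_imp_le)
  thus "ent \<mu> (\<lambda>x. exp (s * fT \<T> x)) \<le>
      (4 * \<kappa> * (T1 \<mu> \<T>)\<^sup>2 + 24 * \<kappa>\<^sup>2 * (T2 \<T>)\<^sup>2) * s\<^sup>2 * mgf \<mu> (fT \<T>) s"
    using ent_exp_fT_le[of s] s unfolding \<theta>_def by (simp add: mult_ac)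
qed

theorem chaos_tail_le:
  assumes t: "0 \<le> t"
  shows "measure_pmf.prob \<mu> {x. fT \<T> x - measure_pmf.expectation \<mu> (fT \<T>) \<ge> t}
    \<le> 2 * exp (- (1 / (60 * (b - a)\<^sup>2 * \<sigma>\<^sup>2)) * min (t\<^sup>2 / (T1 \<mu> \<T>)\<^sup>2) (t / T2 \<T>))"
proof -
  define E where "E = 1 / (60 * \<kappa>) * min (t\<^sup>2 / (T1 \<mu> \<T>)\<^sup>2) (t / T2 \<T>)"
  define P where "P = measure_pmf.prob \<mu> {x. fT \<T> x - measure_pmf.expectation \<mu> (fT \<T>) \<ge> t}"
  have "P \<le> 2 * exp (- E)"
  proof (cases "E \<le> 1 / 2")
    case True
    have "P \<le> 1" unfolding P_def by (rule measure_pmf.prob_le_1)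
    also have "1 < 2 * exp (- (1 / 2 :: real))"
      using exp_half_less_two by (simp add: exp_minus field_simps)
    also have "\<dots> \<le> 2 * exp (- E)" using True by simp
    finally show ?thesis by simp
  next
    case False
    hence "1 / 2 < 1 / (60 * \<kappa>) * min (t\<^sup>2 / (T1 \<mu> \<T>)\<^sup>2) (t / T2 \<T>)" unfolding E_def by simp
    moreover have "0 \<le> \<kappa>" by simp
    ultimately obtain l where pos: "0 < \<kappa>" "0 < T2 \<T>" and l: "0 < l" "l \<le> 1 / (2 * \<kappa> * T2 \<T>)"
      and opt: "- l * t + (4 * \<kappa> * (T1 \<mu> \<T>)\<^sup>2 + 24 * \<kappa>\<^sup>2 * (T2 \<T>)\<^sup>2) * l\<^sup>2 \<le> - E"
      using exists_exponent_for_tail[OF T1_nonneg T2_nonneg _ t] unfolding E_def by blast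
    have "P \<le> exp (- l * (t + measure_pmf.expectation \<mu> (fT \<T>))) * exp (ln (mgf \<mu> (fT \<T>) l))"
      using prob_deviation_le_mgf[OF finite_support l(1)] mgf_pos[OF finite_support]
      unfolding P_def by simp
    also have "\<dots> \<le> exp (- l * (t + measure_pmf.expectation \<mu> (fT \<T>))) * exp (l *
        measure_pmf.expectation \<mu> (fT \<T>) + (4 * \<kappa> * (T1 \<mu> \<T>)\<^sup>2 + 24 * \<kappa>\<^sup>2 * (T2 \<T>)\<^sup>2) * l\<^sup>2)"
      using ln_mgf_fT_le[OF pos l] by simp
    also have "\<dots> \<le> exp (- E)" using opt by (simp flip: exp_add add: algebra_simps)
    finally show ?thesis using exp_gt_zero[of "- E"] by linarith
  qed
  thus ?thesis unfolding P_def E_def by (simp add: mult.assoc)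
qed

end

lemma finite_if_finite_coordinate_images:
  fixes S :: "('a, 'n::finite) vec set"
  assumes "\<And>i. finite ((\<lambda>x. x $ i) ` S)"
  shows "finite S"
proof (rule finite_subset)
  show "S \<subseteq> vec_lambda ` (PiE UNIV (\<lambda>i. (\<lambda>x. x $ i) ` S))"
  proof
    fix x assume "x \<in> S"
    hence "(\<lambda>i. x $ i) \<in> PiE UNIV (\<lambda>i. (\<lambda>x. x $ i) ` S)" by auto
    thus "x \<in> vec_lambda ` (PiE UNIV (\<lambda>i. (\<lambda>x. x $ i) ` S))" by (rule rev_image_eqI) simp
  qed
  show "finite (vec_lambda ` (PiE UNIV (\<lambda>i. (\<lambda>x. x $ i) ` S)))"
    by (intro finite_imageI finite_PiE assms) simp
qed

lemma compact_imp_coefficients_bounded: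
  fixes \<T> :: "('n::finite \<Rightarrow> 'n \<Rightarrow> 'b::real_normed_vector) set"
  assumes "compact \<T>"
  obtains M where "\<And>t i j. t \<in> \<T> \<Longrightarrow> norm (t i j) \<le> M"
proof -
  define S where "S = (\<Union>i. \<Union>j. (\<lambda>t. t i j) ` \<T>)"
  have c: "continuous_on UNIV (\<lambda>t::'n \<Rightarrow> 'n \<Rightarrow> 'b. t i j)" for i j
    by (rule continuous_on_product_then_coordinatewise[OF continuous_on_product_coordinates])
  have "compact ((\<lambda>t. t i j) ` \<T>)" for i j
    by (rule compact_continuous_image[OF continuous_on_subset[OF c] assms]) simp
  hence "bounded S" unfolding S_def by (intro compact_imp_bounded compact_UN) auto
  then obtain M where M: "\<forall>y\<in>S. norm y \<le> M" unfolding bounded_iff by blast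
  show ?thesis
  proof (rule that)
    fix t i j assume "t \<in> \<T>"
    hence "t i j \<in> S" unfolding S_def by blast
    thus "norm (t i j) \<le> M" using M by blast
  qed
qed

theorem corollary2p2:
  fixes \<mu> :: "((real, 'n::{finite,linorder}) vec) pmf"
    and a b \<sigma> t :: real
    and \<T> :: "('n \<Rightarrow> 'n \<Rightarrow> 'b::banach) set"
  assumes "a < b"
    and "\<forall>i. finite ((\<lambda>x. x $ i) ` set_pmf \<mu>)"
    and "\<forall>i. (\<lambda>x. x $ i) ` set_pmf \<mu> \<subseteq> {a..b}"
    and "d_LSI \<mu> \<sigma>"
    and "compact \<T>" and "\<T> \<noteq> {}"
    and "t \<ge> 0"
  shows "measure_pmf.prob \<mu> {x. fT \<T> x - measure_pmf.expectation \<mu> (fT \<T>) \<ge> t}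
    \<le> 2 * exp (- (1 / (60 * (b - a)\<^sup>2 * \<sigma>\<^sup>2)) * min (t\<^sup>2 / (T1 \<mu> \<T>)\<^sup>2) (t / T2 \<T>))"
proof -
  obtain M where M: "\<And>t i j. t \<in> \<T> \<Longrightarrow> norm (t i j) \<le> M"
    using compact_imp_coefficients_bounded[OF assms(5)] by blast
  interpret chaos_concentration \<T> M \<mu> a b \<sigma>
  proof
    show "finite (set_pmf \<mu>)" using assms(2) by (intro finite_if_finite_coordinate_images) blast
    show "\<T> \<noteq> {}" "d_LSI \<mu> \<sigma>" by (fact assms(6), fact assms(4))
    show "norm (t i j) \<le> M" if "t \<in> \<T>" for t i j using M[OF that] .
    show "x $ i \<in> {a..b}" if "x \<in> set_pmf \<mu>" for x i using assms(3) that by blast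
  qed
  show ?thesis by (rule chaos_tail_le[OF assms(7)])
qed

end
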